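(* Let $\mathcal{H}_A,\mathcal{H}_B,\mathcal{H}_{B'}$ be finite-dimensional Hilbert spaces and let $\mathcal{N}:\mathbf{L}(\mathcal{H}_A)\to\mathbf{L}(\mathcal{H}_B)$ and $\mathcal{N}':\mathbf{L}(\mathcal{H}_A)\to\mathbf{L}(\mathcal{H}_{B'})$ be CPTP maps. Suppose the output of $\mathcal{N}'$ is abelian, i.e. $[\mathcal{N}'(\rho),\mathcal{N}'(\sigma)]=0$ for all density operators $\rho,\sigma$ on $\mathcal{H}_A$. Then $\mathcal{N}\succeq\mathcal{N}'$ if and only if there exists a CPTP map $\mathcal{C}:\mathbf{L}(\mathcal{H}_B)\to\mathbf{L}(\mathcal{H}_{B'})$ such that $\mathcal{N}'=\mathcal{C}\circ\mathcal{N}$.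
   Context: For an ensemble $\mathcal{E}=\{p(x);\rho^x\}_{x\in\mathcal{X}}$ (finite set $\mathcal{X}$, probability distribution $p$, density operators $\rho^x$), the guessing probability is $P_{\mathrm{guess}}(\mathcal{E})=\max\sum_xp(x)\operatorname{Tr}[P^x\rho^x]$ over all POVMs $\{P^x\}_x$. We write $\mathcal{N}\succeq\mathcal{N}'$ ($\mathcal{N}$ is more informative than $\mathcal{N}'$) if for every finite set $\mathcal{X}$ and every ensemble $\mathcal{E}=\{p(x);\rho^x_A\}_{x\in\mathcal{X}}$ of density operators on $\mathcal{H}_A$ one has $P_{\mathrm{guess}}(\{p(x);\mathcal{N}(\rho^x_A)\}_x)\ge P_{\mathrm{guess}}(\{p(x);\mathcal{N}'(\rho^x_A)\}_x)$. *)

theory Defs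
  imports "Jordan_Normal_Form.Matrix"
begin

text \<open>Operators on a d-dimensional Hilbert space are d x d complex matrices
(Jordan_Normal_Form type complex mat, with carrier_mat d d).\<close>

definition mtrace :: "complex mat \<Rightarrow> complex" where
  "mtrace M = (\<Sum>i<dim_row M. M $$ (i, i))"

definition psd :: "nat \<Rightarrow> complex mat \<Rightarrow> bool" where
  "psd n M \<longleftrightarrow> M \<in> carrier_mat n n \<and>
     (\<forall>v \<in> carrier_vec n. Im (v \<bullet>c (M *\<^sub>v v)) = 0 \<and> Re (v \<bullet>c (M *\<^sub>v v)) \<ge> 0)"

definition density :: "nat \<Rightarrow> complex mat \<Rightarrow> bool" where
  "density n \<rho> \<longleftrightarrow> psd n \<rho> \<and> mtrace \<rho> = 1"

definition lin_map :: "nat \<Rightarrow> nat \<Rightarrow> (complex mat \<Rightarrow> complex mat) \<Rightarrow> bool" where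
  "lin_map dA dB N \<longleftrightarrow>
     (\<forall>X \<in> carrier_mat dA dA. N X \<in> carrier_mat dB dB) \<and>
     (\<forall>X \<in> carrier_mat dA dA. \<forall>Y \<in> carrier_mat dA dA. \<forall>a b :: complex.
        N (a \<cdot>\<^sub>m X + b \<cdot>\<^sub>m Y) = a \<cdot>\<^sub>m N X + b \<cdot>\<^sub>m N Y)"

text \<open>The map id_k tensor N acting on block matrices in L(C^k tensor C^dA):
 a (k*dA) x (k*dA) matrix is viewed as a k x k array of dA x dA blocks.\<close>
definition block :: "nat \<Rightarrow> complex mat \<Rightarrow> nat \<Rightarrow> nat \<Rightarrow> complex mat" where
  "block d M p q = mat d d (\<lambda>(r, s). M $$ (p * d + r, q * d + s))"

definition ampliate :: "nat \<Rightarrow> nat \<Rightarrow> nat \<Rightarrow> (complex mat \<Rightarrow> complex mat) \<Rightarrow> complex mat \<Rightarrow> complex mat" where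
  "ampliate k dA dB N M = mat (k * dB) (k * dB)
     (\<lambda>(i, j). N (block dA M (i div dB) (j div dB)) $$ (i mod dB, j mod dB))"

definition completely_positive :: "nat \<Rightarrow> nat \<Rightarrow> (complex mat \<Rightarrow> complex mat) \<Rightarrow> bool" where
  "completely_positive dA dB N \<longleftrightarrow>
     (\<forall>k::nat. \<forall>M. psd (k * dA) M \<longrightarrow> psd (k * dB) (ampliate k dA dB N M))"

definition trace_preserving :: "nat \<Rightarrow> (complex mat \<Rightarrow> complex mat) \<Rightarrow> bool" where
  "trace_preserving dA N \<longleftrightarrow> (\<forall>X \<in> carrier_mat dA dA. mtrace (N X) = mtrace X)"

definition CPTP :: "nat \<Rightarrow> nat \<Rightarrow> (complex mat \<Rightarrow> complex mat) \<Rightarrow> bool" where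
  "CPTP dA dB N \<longleftrightarrow> lin_map dA dB N \<and> completely_positive dA dB N \<and> trace_preserving dA N"

definition ensemble :: "nat \<Rightarrow> nat set \<Rightarrow> (nat \<Rightarrow> real) \<Rightarrow> (nat \<Rightarrow> complex mat) \<Rightarrow> bool" where
  "ensemble d X p \<rho> \<longleftrightarrow> finite X \<and> (\<forall>x \<in> X. p x \<ge> 0 \<and> density d (\<rho> x)) \<and> (\<Sum>x\<in>X. p x) = 1"

definition POVM :: "nat \<Rightarrow> nat set \<Rightarrow> (nat \<Rightarrow> complex mat) \<Rightarrow> bool" where
  "POVM d X P \<longleftrightarrow> (\<forall>x \<in> X. psd d (P x)) \<and> (\<forall>i<d. \<forall>j<d. (\<Sum>x\<in>X. P x $$ (i, j)) = (if i = j then 1 else 0))"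

definition P_guess :: "nat \<Rightarrow> nat set \<Rightarrow> (nat \<Rightarrow> real) \<Rightarrow> (nat \<Rightarrow> complex mat) \<Rightarrow> real" where
  "P_guess d X p \<rho> = Sup {(\<Sum>x\<in>X. p x * Re (mtrace (P x * \<rho> x))) | P. POVM d X P}"

definition more_informative ::
  "nat \<Rightarrow> nat \<Rightarrow> (complex mat \<Rightarrow> complex mat) \<Rightarrow> nat \<Rightarrow> (complex mat \<Rightarrow> complex mat) \<Rightarrow> bool" where
  "more_informative dA dB N dB' N' \<longleftrightarrow>
     (\<forall>X p \<rho>. ensemble dA X p \<rho> \<longrightarrow>
        P_guess dB X p (\<lambda>x. N (\<rho> x)) \<ge> P_guess dB' X p (\<lambda>x. N' (\<rho> x)))"

end

theory Submission
  imports Defs "HOL-Analysis.Function_Topology" "HOL-Analysis.Elementary_Metric_Spaces" "Jordan_Normal_Form.Determinant"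
begin

text \<open>
  If \<open>N' = C \<circ> N\<close>, every measurement after \<open>N'\<close> pulls back along the dual of \<open>C\<close> to a
  measurement after \<open>N\<close> with the same success probability. Conversely, the outputs of \<open>N'\<close> commute,
  so they have a common orthonormal eigenbasis \<open>u\<close> and \<open>N'\<close> equals \<open>N'\<close> followed by dephasing
  in \<open>u\<close>. Hence \<open>N' = C \<circ> N\<close> for a CPTP map \<open>C\<close> as soon as the POVM
  \<open>{N'\<^sup>\<dagger>(|u\<^sub>l\<rangle>\<langle>u\<^sub>l|)}\<^sub>l\<close> equals \<open>{N\<^sup>\<dagger>(G\<^sub>l)}\<^sub>l\<close> for a POVM \<open>G\<close> on the output of \<open>N\<close>: take for \<open>C\<close>
  the measure-and-prepare map that measures \<open>G\<close> and prepares \<open>|u\<^sub>l\<rangle>\<close>. The POVMs \<open>G\<close> form a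
  compact convex set, so some \<open>G\<^sup>0\<close> minimises the Hilbert-Schmidt distance between the two
  families. If the minimum were positive, the difference \<open>D\<close> of the two families at \<open>G\<^sup>0\<close> would
  be a separating hyperplane; shifting the Hermitian \<open>D\<^sub>l\<close> by a multiple of the identity and
  normalising turns them into an ensemble on which \<open>N'\<close> has strictly larger guessing probability
  than \<open>N\<close>, contradicting \<open>N \<succeq> N'\<close>.
\<close>

section \<open>Vectors as coordinate functions\<close>

text \<open>A vector of \<open>\<complex>\<^sup>n\<close> is a function \<open>nat \<Rightarrow> complex\<close> of which only the first \<open>n\<close> values matter;
  this makes sets of vectors subsets of a fixed topological space, independent of \<open>n\<close>.\<close>

definition cinner :: "nat \<Rightarrow> (nat \<Rightarrow> complex) \<Rightarrow> (nat \<Rightarrow> complex) \<Rightarrow> complex" where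
  "cinner n f g = (\<Sum>i<n. cnj (f i) * g i)"

definition mat_app :: "nat \<Rightarrow> complex mat \<Rightarrow> (nat \<Rightarrow> complex) \<Rightarrow> (nat \<Rightarrow> complex)" where
  "mat_app n M f = (\<lambda>i. if i < n then (\<Sum>j<n. M $$ (i,j) * f j) else 0)"

definition qform :: "nat \<Rightarrow> complex mat \<Rightarrow> (nat \<Rightarrow> complex) \<Rightarrow> complex" where
  "qform n M f = (\<Sum>i<n. \<Sum>j<n. cnj (f i) * M $$ (i,j) * f j)"

definition hermitian :: "nat \<Rightarrow> complex mat \<Rightarrow> bool" where
  "hermitian n M \<longleftrightarrow> M \<in> carrier_mat n n \<and> (\<forall>i<n. \<forall>j<n. M $$ (i,j) = cnj (M $$ (j,i)))"

lemma cinner_lin_right: "cinner n f (\<lambda>i. a * g i + b * h i) = a * cinner n f g + b * cinner n f h"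
  unfolding cinner_def by (simp add: sum.distrib sum_distrib_left algebra_simps)

lemma cinner_lin_left: "cinner n (\<lambda>i. a * g i + b * h i) f = cnj a * cinner n g f + cnj b * cinner n h f"
  unfolding cinner_def by (simp add: sum.distrib sum_distrib_left algebra_simps)

lemma cinner_add_right: "cinner n f (\<lambda>i. g i + b * h i) = cinner n f g + b * cinner n f h"
  using cinner_lin_right[of n f 1 g b h] by simp

lemma cinner_add_left: "cinner n (\<lambda>i. g i + b * h i) f = cinner n g f + cnj b * cinner n h f"
  using cinner_lin_left[of n 1 g b h f] by simp

lemma cinner_diff_right: "cinner n f (\<lambda>i. g i - b * h i) = cinner n f g - b * cinner n f h"
  using cinner_lin_right[of n f 1 g "-b" h] by simp

lemma cinner_scale: "cinner n (\<lambda>i. a * f i) (\<lambda>i. b * g i) = cnj a * b * cinner n f g"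
  unfolding cinner_def by (simp add: sum_distrib_left mult.commute mult.left_commute)

lemma cinner_scale_left: "cinner n (\<lambda>i. a * f i) g = cnj a * cinner n f g"
  unfolding cinner_def by (simp add: sum_distrib_left mult.assoc)

lemma cinner_scale_right: "cinner n f (\<lambda>i. b * g i) = b * cinner n f g"
  unfolding cinner_def by (simp add: sum_distrib_left mult_ac)

lemma cinner_cnj: "cnj (cinner n f g) = cinner n g f"
  unfolding cinner_def cnj_sum by (simp add: mult.commute)

lemma cinner_self_real: "Im (cinner n f f) = 0" "0 \<le> Re (cinner n f f)"
  "cinner n f f = of_real (\<Sum>i<n. (cmod (f i))^2)"
proof -
  have e: "cinner n f f = of_real (\<Sum>i<n. (cmod (f i))^2)"
    unfolding cinner_def of_real_sum
    by (intro sum.cong refl) (simp add: complex_norm_square[symmetric] mult.commute)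
  thus "cinner n f f = of_real (\<Sum>i<n. (cmod (f i))^2)" .
  show "Im (cinner n f f) = 0" "0 \<le> Re (cinner n f f)" unfolding e by (auto intro: sum_nonneg)
qed

lemma cinner_self_eq_0_iff: "Re (cinner n f f) = 0 \<longleftrightarrow> (\<forall>i<n. f i = 0)"
proof -
  have "Re (cinner n f f) = (\<Sum>i<n. (cmod (f i))^2)" using cinner_self_real(3)[of n f] by simp
  thus ?thesis by (auto simp: sum_nonneg_eq_0_iff)
qed

lemma cinner_self_normalize:
  assumes "0 < Re (cinner n g g)"
  shows "cinner n (\<lambda>i. complex_of_real (1 / sqrt (Re (cinner n g g))) * g i)
                  (\<lambda>i. complex_of_real (1 / sqrt (Re (cinner n g g))) * g i) = 1"
proof -
  define R where "R = Re (cinner n g g)"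
  have e: "cinner n g g = complex_of_real R"
    using cinner_self_real(1)[of n g] unfolding R_def by (simp add: complex_eq_iff)
  show ?thesis unfolding cinner_scale R_def[symmetric] e
    using assms unfolding R_def[symmetric] by (simp flip: of_real_mult)
qed

lemma mat_app_lin: "mat_app n M (\<lambda>i. a * g i + b * h i) = (\<lambda>i. a * mat_app n M g i + b * mat_app n M h i)"
  unfolding mat_app_def by (auto simp: sum.distrib sum_distrib_left algebra_simps)

lemma mat_app_scale: "mat_app n M (\<lambda>i. c * f i) = (\<lambda>i. c * mat_app n M f i)"
  using mat_app_lin[of n M c f 0 f] by simp

lemma mat_app_outside: "i \<ge> n \<Longrightarrow> mat_app n M f i = 0"
  unfolding mat_app_def by simp

lemma index_mult_square:
  assumes "A \<in> carrier_mat n n" "B \<in> carrier_mat n n" "i < n" "k < n"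
  shows "(A * B) $$ (i,k) = (\<Sum>j<n. A $$ (i,j) * B $$ (j,k))"
  using assms by (simp add: scalar_prod_def atLeast0LessThan)

lemma mat_app_mult:
  assumes K: "K \<in> carrier_mat n n" and L: "L \<in> carrier_mat n n"
  shows "mat_app n K (mat_app n L f) = mat_app n (K * L) f"
proof
  fix i show "mat_app n K (mat_app n L f) i = mat_app n (K * L) f i"
  proof (cases "i < n")
    case True
    have "mat_app n K (mat_app n L f) i = (\<Sum>j<n. \<Sum>k<n. K $$ (i,j) * L $$ (j,k) * f k)"
      using True unfolding mat_app_def by (simp add: sum_distrib_left mult.assoc)
    also have "\<dots> = (\<Sum>k<n. \<Sum>j<n. K $$ (i,j) * L $$ (j,k) * f k)" by (rule sum.swap)
    also have "\<dots> = mat_app n (K * L) f i"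
      using True unfolding mat_app_def by (simp add: index_mult_square[OF K L] sum_distrib_right)
    finally show ?thesis .
  qed (simp add: mat_app_def)
qed

lemma qform_cong: "(\<And>i. i < n \<Longrightarrow> f i = g i) \<Longrightarrow> qform n M f = qform n M g"
  unfolding qform_def by (intro sum.cong) auto

lemma qform_eq_cinner: "qform n M f = cinner n f (mat_app n M f)"
  unfolding qform_def cinner_def mat_app_def by (simp add: sum_distrib_left mult.assoc)

lemma qform_scale: "qform n K (\<lambda>i. a * f i) = cnj a * a * qform n K f"
  unfolding qform_def sum_distrib_left by (intro sum.cong refl) (simp add: algebra_simps)

lemma qform_zero: "(\<And>i. i < n \<Longrightarrow> f i = 0) \<Longrightarrow> qform n K f = 0"
  unfolding qform_def by simp

lemma cscalar_prod_eq_qform: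
  assumes M: "M \<in> carrier_mat n n" and v: "v \<in> carrier_vec n"
  shows "v \<bullet>c (M *\<^sub>v v) = cnj (qform n M (\<lambda>i. v $ i))"
proof -
  have "v \<bullet>c (M *\<^sub>v v) = (\<Sum>i<n. v $ i * cnj (\<Sum>j<n. M $$ (i,j) * v $ j))"
    using M v by (auto simp: scalar_prod_def atLeast0LessThan intro!: sum.cong)
  also have "\<dots> = cnj (qform n M (\<lambda>i. v $ i))"
    unfolding qform_def cnj_sum by (simp add: sum_distrib_left mult.assoc mult.left_commute)
  finally show ?thesis .
qed

lemma psd_iff_qform:
  "psd n M \<longleftrightarrow> M \<in> carrier_mat n n \<and> (\<forall>f. Im (qform n M f) = 0 \<and> 0 \<le> Re (qform n M f))"
proof
  assume p: "psd n M"
  hence M: "M \<in> carrier_mat n n" by (simp add: psd_def)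
  show "M \<in> carrier_mat n n \<and> (\<forall>f. Im (qform n M f) = 0 \<and> 0 \<le> Re (qform n M f))"
  proof (intro conjI allI M)
    fix f :: "nat \<Rightarrow> complex"
    have v: "vec n f \<in> carrier_vec n" by simp
    have e: "qform n M (\<lambda>i. vec n f $ i) = qform n M f" by (rule qform_cong) simp
    from p v have "Im (vec n f \<bullet>c (M *\<^sub>v vec n f)) = 0 \<and> 0 \<le> Re (vec n f \<bullet>c (M *\<^sub>v vec n f))"
      by (simp add: psd_def)
    thus "Im (qform n M f) = 0" "0 \<le> Re (qform n M f)" using cscalar_prod_eq_qform[OF M v] e by auto
  qed
next
  assume a: "M \<in> carrier_mat n n \<and> (\<forall>f. Im (qform n M f) = 0 \<and> 0 \<le> Re (qform n M f))"
  show "psd n M" unfolding psd_def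
  proof (intro conjI ballI)
    show "M \<in> carrier_mat n n" using a by simp
    fix v :: "complex vec" assume v: "v \<in> carrier_vec n"
    from a have "Im (qform n M (\<lambda>i. v $ i)) = 0 \<and> 0 \<le> Re (qform n M (\<lambda>i. v $ i))" by blast
    thus "Im (v \<bullet>c (M *\<^sub>v v)) = 0" "0 \<le> Re (v \<bullet>c (M *\<^sub>v v))"
      using cscalar_prod_eq_qform[OF _ v, of M] a by auto
  qed
qed

lemma psdD: "psd n M \<Longrightarrow> Im (qform n M f) = 0" "psd n M \<Longrightarrow> 0 \<le> Re (qform n M f)"
  "psd n M \<Longrightarrow> M \<in> carrier_mat n n"
  by (auto simp: psd_iff_qform)

lemma sum_supported_pair:
  fixes g :: "nat \<Rightarrow> 'a::comm_monoid_add"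
  assumes "i < n" "j < n" "i \<noteq> j" "\<And>k. k \<noteq> i \<Longrightarrow> k \<noteq> j \<Longrightarrow> g k = 0"
  shows "(\<Sum>k<n. g k) = g i + g j"
proof -
  have "(\<Sum>k<n. g k) = (\<Sum>k\<in>{i,j}. g k)"
    by (rule sum.mono_neutral_right) (use assms in auto)
  thus ?thesis using assms by simp
qed

lemma sum_supported_single:
  fixes g :: "nat \<Rightarrow> 'a::comm_monoid_add"
  assumes "i < n" "\<And>k. k \<noteq> i \<Longrightarrow> g k = 0"
  shows "(\<Sum>k<n. g k) = g i"
proof -
  have "(\<Sum>k<n. g k) = (\<Sum>k\<in>{i}. g k)"
    by (rule sum.mono_neutral_right) (use assms in auto)
  thus ?thesis using assms by simp
qed

lemma qform_pair:
  assumes "i < n" "j < n" "i \<noteq> j"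
  shows "qform n M (\<lambda>k. if k = i then a else if k = j then b else 0) =
    cnj a * M $$ (i,i) * a + cnj a * M $$ (i,j) * b + cnj b * M $$ (j,i) * a + cnj b * M $$ (j,j) * b"
proof -
  define f where "f = (\<lambda>k::nat. if k = i then a else if k = j then b else 0)"
  have inner: "(\<Sum>l<n. cnj (f k) * M $$ (k,l) * f l) = cnj (f k) * M $$ (k,i) * a + cnj (f k) * M $$ (k,j) * b" for k
    by (subst sum_supported_pair[OF assms]) (use assms in \<open>auto simp: f_def\<close>)
  have "qform n M f = (\<Sum>k<n. cnj (f k) * M $$ (k,i) * a + cnj (f k) * M $$ (k,j) * b)"
    unfolding qform_def inner ..
  also have "\<dots> = cnj a * M $$ (i,i) * a + cnj a * M $$ (i,j) * b + (cnj b * M $$ (j,i) * a + cnj b * M $$ (j,j) * b)"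
    by (subst sum_supported_pair[OF assms]) (use assms in \<open>auto simp: f_def\<close>)
  finally show ?thesis unfolding f_def by (simp add: add.assoc)
qed

lemma qform_single:
  assumes "i < n"
  shows "qform n M (\<lambda>k. if k = i then a else 0) = cnj a * M $$ (i,i) * a"
proof -
  define f where "f = (\<lambda>k::nat. if k = i then a else 0)"
  have inner: "(\<Sum>l<n. cnj (f k) * M $$ (k,l) * f l) = cnj (f k) * M $$ (k,i) * a" for k
    by (subst sum_supported_single[OF assms]) (use assms in \<open>auto simp: f_def\<close>)
  have "qform n M f = (\<Sum>k<n. cnj (f k) * M $$ (k,i) * a)"
    unfolding qform_def inner ..
  also have "\<dots> = cnj a * M $$ (i,i) * a"
    by (subst sum_supported_single[OF assms]) (use assms in \<open>auto simp: f_def\<close>)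
  finally show ?thesis unfolding f_def .
qed

lemma psd_hermitian: assumes p: "psd n M" shows "hermitian n M"
  unfolding hermitian_def
proof (intro conjI allI impI)
  show "M \<in> carrier_mat n n" using p by (simp add: psd_iff_qform)
  fix i j assume i: "i < n" and j: "j < n"
  have ii: "Im (M $$ (i,i)) = 0" "Im (M $$ (j,j)) = 0"
    using psdD(1)[OF p, of "\<lambda>k. if k = i then 1 else 0"] qform_single[OF i, of M 1]
      psdD(1)[OF p, of "\<lambda>k. if k = j then 1 else 0"] qform_single[OF j, of M 1] by simp_all
  show "M $$ (i,j) = cnj (M $$ (j,i))"
  proof (cases "i = j")
    case True
    thus ?thesis using ii by (simp add: complex_eq_iff)
  next
    case False
    have "Im (qform n M (\<lambda>k. if k = i then 1 else if k = j then 1 else 0)) = 0" by (rule psdD(1)[OF p])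
    hence a: "Im (M $$ (i,j)) + Im (M $$ (j,i)) = 0" using qform_pair[OF i j False, of M 1 1] ii by simp
    have "Im (qform n M (\<lambda>k. if k = i then 1 else if k = j then \<i> else 0)) = 0" by (rule psdD(1)[OF p])
    hence b: "Re (M $$ (i,j)) - Re (M $$ (j,i)) = 0" using qform_pair[OF i j False, of M 1 \<i>] ii by simp
    show ?thesis using a b by (simp add: complex_eq_iff)
  qed
qed

lemma hermitianD: "hermitian n M \<Longrightarrow> i < n \<Longrightarrow> j < n \<Longrightarrow> cnj (M $$ (i,j)) = M $$ (j,i)"
  unfolding hermitian_def by (metis complex_cnj_cnj)

lemma hermitian_qform_real: assumes h: "hermitian n M" shows "Im (qform n M f) = 0"
proof -
  have "cnj (qform n M f) = (\<Sum>i<n. \<Sum>j<n. f i * cnj (M $$ (i,j)) * cnj (f j))"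
    unfolding qform_def cnj_sum by simp
  also have "\<dots> = (\<Sum>i<n. \<Sum>j<n. f i * M $$ (j,i) * cnj (f j))"
    by (intro sum.cong refl) (simp add: hermitianD[OF h])
  also have "\<dots> = (\<Sum>j<n. \<Sum>i<n. f i * M $$ (j,i) * cnj (f j))"
    by (rule sum.swap)
  also have "\<dots> = qform n M f" unfolding qform_def
    by (intro sum.cong refl) (simp add: mult.commute mult.left_commute)
  finally have "cnj (qform n M f) = qform n M f" .
  thus ?thesis by (metis Reals_cnj_iff complex_is_Real_iff)
qed

lemma hermitian_mat_app_sym:
  assumes h: "hermitian n M" shows "cinner n f (mat_app n M g) = cinner n (mat_app n M f) g"
proof -
  have "cinner n f (mat_app n M g) = (\<Sum>i<n. \<Sum>j<n. cnj (f i) * M $$ (i,j) * g j)"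
    unfolding cinner_def mat_app_def by (simp add: sum_distrib_left mult.assoc)
  also have "\<dots> = (\<Sum>j<n. \<Sum>i<n. cnj (f i) * M $$ (i,j) * g j)" by (rule sum.swap)
  also have "\<dots> = (\<Sum>j<n. \<Sum>i<n. cnj (f i) * cnj (M $$ (j,i)) * g j)"
    by (intro sum.cong refl) (simp add: hermitianD[OF h])
  also have "\<dots> = cinner n (mat_app n M f) g"
    unfolding cinner_def mat_app_def cnj_sum
    by (auto simp: sum_distrib_right sum_distrib_left mult.commute mult.left_commute intro!: sum.cong)
  finally show ?thesis .
qed

lemma continuous_on_coord[continuous_intros]: "continuous_on S (\<lambda>x::'a \<Rightarrow> 'b::topological_space. x i)"
  by (rule continuous_on_subset[OF continuous_on_product_coordinates]) auto

lemma continuous_on_cinner_right[continuous_intros]: "continuous_on S (\<lambda>f. cinner n g f)"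
  unfolding cinner_def by (intro continuous_intros)

lemma continuous_on_cinner_self[continuous_intros]: "continuous_on S (\<lambda>f. cinner n f f)"
  unfolding cinner_def by (intro continuous_intros)

lemma continuous_on_qform[continuous_intros]: "continuous_on S (\<lambda>f. qform n K f)"
  unfolding qform_def by (intro continuous_intros)

lemma continuous_on_mat_app[continuous_intros]: "continuous_on S (\<lambda>f. mat_app n K f i)"
  unfolding mat_app_def by (cases "i < n") (simp_all add: continuous_intros)

lemma compact_Collect_all_mem:
  fixes K :: "'i \<Rightarrow> 'b::topological_space set"
  assumes "\<And>i. compact (K i)"
  shows "compact {f. \<forall>i. f i \<in> K i}"
proof -
  have "compactin (product_topology (\<lambda>i. euclidean) UNIV) (PiE UNIV K)"
    using assms by (simp add: compactin_PiE)
  hence "compact (PiE UNIV K)" by (simp add: euclidean_product_topology)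
  moreover have "PiE UNIV K = {f. \<forall>i. f i \<in> K i}" by (auto simp: PiE_iff)
  ultimately show ?thesis by simp
qed

lemma compact_unit_disc: "compact {z :: complex. cmod z \<le> 1}"
proof -
  let ?c = "\<lambda>p :: real \<times> real. complex_of_real (fst p) + \<i> * complex_of_real (snd p)"
  have norm_c: "cmod (?c p) = norm p" for p
    by (cases p) (simp add: norm_Pair cmod_def)
  have "{z. cmod z \<le> 1} = ?c ` cball 0 1"
  proof (intro equalityI subsetI)
    fix z :: complex assume "z \<in> {z. cmod z \<le> 1}"
    moreover have "z = ?c (Re z, Im z)" by (simp add: complex_eq_iff)
    ultimately show "z \<in> ?c ` cball 0 1" using norm_c[of "(Re z, Im z)"] by force
  qed (use norm_c in auto)
  moreover have "compact (?c ` cball 0 1)"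
    by (intro compact_continuous_image compact_cball continuous_intros)
  ultimately show ?thesis by simp
qed

section \<open>Common eigenbases of commuting Hermitian matrices\<close>

definition closed_subspace :: "nat \<Rightarrow> (nat \<Rightarrow> complex) set \<Rightarrow> bool" where
  "closed_subspace n W \<longleftrightarrow> closed W \<and> (\<forall>f\<in>W. \<forall>i\<ge>n. f i = 0) \<and>
     (\<forall>f\<in>W. \<forall>g\<in>W. \<forall>a b. (\<lambda>i. a * f i + b * g i) \<in> W)"

lemma closed_subspace_lin:
  "closed_subspace n W \<Longrightarrow> f \<in> W \<Longrightarrow> g \<in> W \<Longrightarrow> (\<lambda>i. a * f i + b * g i) \<in> W"
  unfolding closed_subspace_def by blast

lemma closed_subspace_scale: "closed_subspace n W \<Longrightarrow> f \<in> W \<Longrightarrow> (\<lambda>i. c * f i) \<in> W"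
  using closed_subspace_lin[of n W f f c 0] by simp

lemma closed_subspace_outside: "closed_subspace n W \<Longrightarrow> f \<in> W \<Longrightarrow> n \<le> i \<Longrightarrow> f i = 0"
  unfolding closed_subspace_def by blast

lemma closed_subspace_unit_vector:
  assumes W: "closed_subspace n W" and f0: "f0 \<in> W" "i0 < n" "f0 i0 \<noteq> 0"
  shows "\<exists>x\<in>W. cinner n x x = 1"
proof -
  have "Re (cinner n f0 f0) \<noteq> 0" using cinner_self_eq_0_iff[of n f0] f0 by auto
  hence "0 < Re (cinner n f0 f0)" using cinner_self_real(2)[of n f0] by linarith
  from cinner_self_normalize[OF this] closed_subspace_scale[OF W f0(1)] show ?thesis by blast
qed

lemma closed_subspace_max_qform:
  assumes W: "closed_subspace n W" and ne: "f0 \<in> W" "i0 < n" "f0 i0 \<noteq> 0"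
  obtains x where "x \<in> W" "cinner n x x = 1"
    "\<And>y. y \<in> W \<Longrightarrow> cinner n y y = 1 \<Longrightarrow> Re (qform n K y) \<le> Re (qform n K x)"
proof -
  define S where "S = {f. \<forall>i. f i \<in> {z. cmod z \<le> 1}} \<inter> (W \<inter> {f. cinner n f f = 1})"
  have "compact S" unfolding S_def
  proof (rule compact_Int_closed)
    show "compact {f :: nat \<Rightarrow> complex. \<forall>i. f i \<in> {z. cmod z \<le> 1}}"
      by (rule compact_Collect_all_mem, rule compact_unit_disc)
    show "closed (W \<inter> {f. cinner n f f = 1})"
      using W unfolding closed_subspace_def
      by (intro closed_Int closed_Collect_eq continuous_intros) auto
  qed
  have coord_bound: "f i \<in> {z. cmod z \<le> 1}" if "f \<in> W" "cinner n f f = 1" for f i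
  proof (cases "i < n")
    case True
    have "(\<Sum>i<n. (cmod (f i))^2) = 1" using that(2) cinner_self_real(3)[of n f] of_real_eq_1_iff by metis
    moreover have "(cmod (f i))^2 \<le> (\<Sum>i<n. (cmod (f i))^2)"
      by (rule member_le_sum) (use True in auto)
    ultimately have "(cmod (f i))^2 \<le> 1" by simp
    thus ?thesis by (simp add: power_le_one_iff abs_le_square_iff)
  next
    case False thus ?thesis using closed_subspace_outside[OF W that(1)] by simp
  qed
  hence SW: "S = W \<inter> {f. cinner n f f = 1}" unfolding S_def by auto
  have "S \<noteq> {}" using closed_subspace_unit_vector[OF W ne] unfolding SW by auto
  moreover have "continuous_on S (\<lambda>f. Re (qform n K f))" by (intro continuous_intros)
  ultimately obtain x where "x \<in> S" "\<And>y. y \<in> S \<Longrightarrow> Re (qform n K y) \<le> Re (qform n K x)"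
    using continuous_attains_sup[OF \<open>compact S\<close>] by blast
  thus ?thesis using that unfolding SW by blast
qed

lemma max_qform_bound:
  assumes W: "closed_subspace n W" and g: "g \<in> W"
    and max: "\<And>y. y \<in> W \<Longrightarrow> cinner n y y = 1 \<Longrightarrow> Re (qform n K y) \<le> \<mu>"
  shows "Re (qform n K g) \<le> \<mu> * Re (cinner n g g)"
proof (cases "Re (cinner n g g) = 0")
  case True
  hence "qform n K g = 0" using cinner_self_eq_0_iff[of n g] by (intro qform_zero) auto
  thus ?thesis using True by simp
next
  case False
  define c where "c = sqrt (Re (cinner n g g))"
  have pos: "Re (cinner n g g) > 0" using cinner_self_real(2)[of n g] False by linarith
  hence c: "c > 0" "c^2 = Re (cinner n g g)" unfolding c_def by auto
  define y where "y = (\<lambda>i. complex_of_real (1/c) * g i)"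
  have "Re (qform n K y) \<le> \<mu>"
    using max closed_subspace_scale[OF W g] cinner_self_normalize[OF pos] unfolding y_def c_def by blast
  moreover have "qform n K y = complex_of_real (1/c^2) * qform n K g"
    unfolding y_def qform_scale by (simp add: power2_eq_square)
  ultimately have "Re (qform n K g) / c^2 \<le> \<mu>" by simp
  hence "Re (qform n K g) \<le> \<mu> * c^2" using c pos by (simp add: divide_le_eq)
  thus ?thesis using c(2) by simp
qed

lemma quadratic_nonpos_imp_linear_coeff_0:
  fixes a b :: real
  assumes "\<And>t. 2 * t * a + t^2 * b \<le> 0"
  shows "a = 0"
proof -
  define s where "s = \<bar>b\<bar> + 1"
  have s: "s > 0" unfolding s_def by simp
  have "2 * (a/s) * a + (a/s)^2 * b \<le> 0" by (rule assms)
  hence "(2 * (a/s) * a + (a/s)^2 * b) * s^2 \<le> 0" using s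
    by (simp add: mult_nonpos_nonneg)
  moreover have "a^2 * (2 * s + b) = (2 * (a/s) * a + (a/s)^2 * b) * s^2"
    using s by (simp add: field_simps power2_eq_square)
  ultimately have "a^2 * (2 * s + b) \<le> 0" by simp
  moreover have "2 * s + b > 0" unfolding s_def by (simp add: abs_if)
  ultimately have "a^2 \<le> 0" by (simp add: mult_le_0_iff)
  thus ?thesis by simp
qed

lemma max_qform_first_variation:
  assumes K: "hermitian n K" and W: "closed_subspace n W" and x: "x \<in> W" "cinner n x x = 1"
    and max: "\<And>g. g \<in> W \<Longrightarrow> Re (qform n K g) \<le> Re (qform n K x) * Re (cinner n g g)"
    and w: "w \<in> W"
  shows "Re (cinner n w (mat_app n K x)) = Re (qform n K x) * Re (cinner n w x)"
proof -
  define \<mu> where "\<mu> = Re (qform n K x)"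
  define A where "A = Re (cinner n w (mat_app n K x))"
  define B where "B = Re (qform n K w)"
  define C where "C = Re (cinner n w x)"
  define D where "D = Re (cinner n w w)"
  have "2 * t * (A - \<mu> * C) + t^2 * (B - \<mu> * D) \<le> 0" for t :: real
  proof -
    define g where "g = (\<lambda>i. 1 * x i + complex_of_real t * w i)"
    have sym: "cinner n x (mat_app n K w) = cnj (cinner n w (mat_app n K x))"
      using hermitian_mat_app_sym[OF K, of x w] cinner_cnj[of n w "mat_app n K x"] by simp
    have "mat_app n K g = (\<lambda>i. 1 * mat_app n K x i + complex_of_real t * mat_app n K w i)"
      unfolding g_def by (rule mat_app_lin)
    hence "qform n K g = cinner n g (mat_app n K x) + complex_of_real t * cinner n g (mat_app n K w)"
      unfolding qform_eq_cinner by (simp add: cinner_add_right)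
    also have "cinner n g (mat_app n K x) = cinner n x (mat_app n K x) + complex_of_real t * cinner n w (mat_app n K x)"
      unfolding g_def by (simp add: cinner_add_left)
    also have "cinner n g (mat_app n K w) = cinner n x (mat_app n K w) + complex_of_real t * cinner n w (mat_app n K w)"
      unfolding g_def by (simp add: cinner_add_left)
    finally have "qform n K g = qform n K x + complex_of_real t * (cinner n w (mat_app n K x) + cnj (cinner n w (mat_app n K x)))
        + complex_of_real (t^2) * qform n K w"
      unfolding sym qform_eq_cinner by (simp add: algebra_simps power2_eq_square)
    hence hg: "Re (qform n K g) = \<mu> + 2 * t * A + t^2 * B"
      unfolding \<mu>_def A_def B_def by simp
    have "cinner n g g = cinner n g x + complex_of_real t * cinner n g w"
      using cinner_add_right[of n g x "complex_of_real t" w] unfolding g_def by simp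
    also have "\<dots> = cinner n x x + complex_of_real t * (cinner n w x + cnj (cinner n w x))
        + complex_of_real (t^2) * cinner n w w"
      unfolding g_def by (simp add: cinner_add_left cinner_cnj algebra_simps power2_eq_square)
    finally have gg: "Re (cinner n g g) = 1 + 2 * t * C + t^2 * D" unfolding C_def D_def x(2) by simp
    have "g \<in> W" unfolding g_def by (rule closed_subspace_lin[OF W x(1) w])
    from max[OF this] have "\<mu> + 2 * t * A + t^2 * B \<le> \<mu> * (1 + 2 * t * C + t^2 * D)"
      using hg gg unfolding \<mu>_def by simp
    thus ?thesis by (simp add: algebra_simps)
  qed
  from quadratic_nonpos_imp_linear_coeff_0[OF this] show ?thesis unfolding A_def C_def \<mu>_def by simp
qed

lemma hermitian_eigenvector_in_invariant_subspace:
  assumes K: "hermitian n K" and W: "closed_subspace n W" and inv: "\<And>f. f \<in> W \<Longrightarrow> mat_app n K f \<in> W"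
    and ne: "f0 \<in> W" "i0 < n" "f0 i0 \<noteq> 0"
  shows "\<exists>x\<in>W. cinner n x x = 1 \<and> (\<exists>\<mu>::real. mat_app n K x = (\<lambda>i. complex_of_real \<mu> * x i))"
proof -
  obtain x where xW: "x \<in> W" and xx: "cinner n x x = 1"
    and xmax: "\<And>y. y \<in> W \<Longrightarrow> cinner n y y = 1 \<Longrightarrow> Re (qform n K y) \<le> Re (qform n K x)"
    using closed_subspace_max_qform[OF W ne] by blast
  define \<mu> where "\<mu> = Re (qform n K x)"
  have var: "Re (cinner n w (mat_app n K x)) = \<mu> * Re (cinner n w x)" if "w \<in> W" for w
    unfolding \<mu>_def
    by (rule max_qform_first_variation[OF K W xW xx max_qform_bound[OF W _ xmax] that])
  define w where "w = (\<lambda>i. 1 * mat_app n K x i + complex_of_real (- \<mu>) * x i)"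
  have wW: "w \<in> W" unfolding w_def by (rule closed_subspace_lin[OF W inv[OF xW] xW])
  have "cinner n w w = cinner n w (mat_app n K x) - complex_of_real \<mu> * cinner n w x"
    by (subst (2) w_def) (simp add: cinner_add_right cinner_diff_right)
  hence "Re (cinner n w w) = 0" using var[OF wW] by simp
  hence w0: "\<forall>i<n. w i = 0" using cinner_self_eq_0_iff by blast
  have "mat_app n K x = (\<lambda>i. complex_of_real \<mu> * x i)"
  proof
    fix i show "mat_app n K x i = complex_of_real \<mu> * x i"
    proof (cases "i < n")
      case True thus ?thesis using w0 unfolding w_def by (simp add: algebra_simps)
    next
      case False thus ?thesis using closed_subspace_outside[OF W xW] mat_app_outside by simp
    qed
  qed
  thus ?thesis using xW xx by blast
qed

definition eigenspace :: "nat \<Rightarrow> complex mat \<Rightarrow> complex \<Rightarrow> (nat \<Rightarrow> complex) set" where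
  "eigenspace n K \<mu> = {f. mat_app n K f = (\<lambda>i. \<mu> * f i)}"

lemma closed_subspace_Int_eigenspace:
  assumes W: "closed_subspace n W"
  shows "closed_subspace n (W \<inter> eigenspace n K \<mu>)"
  unfolding closed_subspace_def
proof (intro conjI ballI allI)
  have "eigenspace n K \<mu> = {f. \<forall>i. mat_app n K f i = \<mu> * f i}"
    unfolding eigenspace_def by (auto simp: fun_eq_iff)
  moreover have "closed {f. \<forall>i. mat_app n K f i = \<mu> * f i}"
    by (intro closed_Collect_all closed_Collect_eq continuous_intros)
  ultimately show "closed (W \<inter> eigenspace n K \<mu>)"
    using W unfolding closed_subspace_def by (simp add: closed_Int)
  show "\<And>f i. f \<in> W \<inter> eigenspace n K \<mu> \<Longrightarrow> n \<le> i \<longrightarrow> f i = 0"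
    using closed_subspace_outside[OF W] by blast
  fix f g a b assume "f \<in> W \<inter> eigenspace n K \<mu>" "g \<in> W \<inter> eigenspace n K \<mu>"
  thus "(\<lambda>i. a * f i + b * g i) \<in> W \<inter> eigenspace n K \<mu>"
    using closed_subspace_lin[OF W] unfolding eigenspace_def by (auto simp: mat_app_lin algebra_simps)
qed

lemma commuting_eigenspace_invariant:
  assumes K: "K \<in> carrier_mat n n" and L: "L \<in> carrier_mat n n" and KL: "K * L = L * K"
    and f: "f \<in> eigenspace n K \<mu>"
  shows "mat_app n L f \<in> eigenspace n K \<mu>"
proof -
  have "mat_app n K (mat_app n L f) = mat_app n (K * L) f" by (rule mat_app_mult[OF K L])
  also have "\<dots> = mat_app n L (mat_app n K f)" unfolding KL by (rule mat_app_mult[OF L K, symmetric])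
  finally show ?thesis using f unfolding eigenspace_def by (simp add: mat_app_scale)
qed

lemma common_eigenvector_in_invariant_subspace:
  assumes "finite Ks"
  shows "\<forall>K\<in>Ks. hermitian n K \<Longrightarrow> \<forall>K\<in>Ks. \<forall>L\<in>Ks. K * L = L * K \<Longrightarrow> closed_subspace n W \<Longrightarrow>
    \<forall>K\<in>Ks. \<forall>f\<in>W. mat_app n K f \<in> W \<Longrightarrow> f0 \<in> W \<Longrightarrow> i0 < n \<Longrightarrow> f0 i0 \<noteq> 0 \<Longrightarrow>
    \<exists>x\<in>W. cinner n x x = 1 \<and> (\<forall>K\<in>Ks. \<exists>\<mu>. x \<in> eigenspace n K \<mu>)"
  using assms
proof (induction Ks arbitrary: W f0 i0 rule: finite_induct)
  case empty
  thus ?case using closed_subspace_unit_vector by blast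
next
  case (insert K Ks)
  have hK: "hermitian n K" and W: "closed_subspace n W" using insert.prems by auto
  have Kc: "K \<in> carrier_mat n n" using hK by (simp add: hermitian_def)
  obtain x \<mu> where xW: "x \<in> W" and xx: "cinner n x x = 1" and xe: "mat_app n K x = (\<lambda>i. complex_of_real \<mu> * x i)"
    using hermitian_eigenvector_in_invariant_subspace[OF hK W _ insert.prems(5-7)] insert.prems(4) by blast
  define W' where "W' = W \<inter> eigenspace n K \<mu>"
  have inv': "\<forall>L\<in>Ks. \<forall>f\<in>W'. mat_app n L f \<in> W'"
  proof (intro ballI)
    fix L f assume L: "L \<in> Ks" and f: "f \<in> W'"
    have Lc: "L \<in> carrier_mat n n" using insert.prems(1) L by (simp add: hermitian_def)
    show "mat_app n L f \<in> W'"
      using insert.prems(2,4) L f commuting_eigenspace_invariant[OF Kc Lc] unfolding W'_def by blast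
  qed
  have xW': "x \<in> W'" using xW xe unfolding W'_def eigenspace_def by simp
  obtain i1 where i1: "i1 < n" "x i1 \<noteq> 0" using cinner_self_eq_0_iff[of n x] xx by auto
  obtain y where "y \<in> W'" "cinner n y y = 1" "\<forall>L\<in>Ks. \<exists>\<mu>. y \<in> eigenspace n L \<mu>"
    using insert.IH[OF _ _ closed_subspace_Int_eigenspace[OF W, of K \<mu>, folded W'_def] inv' xW' i1] insert.prems(1,2)
    unfolding W'_def by blast
  thus ?case unfolding W'_def by blast
qed

definition orthonormal :: "nat \<Rightarrow> nat \<Rightarrow> (nat \<Rightarrow> nat \<Rightarrow> complex) \<Rightarrow> bool" where
  "orthonormal n k u \<longleftrightarrow> (\<forall>l<k. \<forall>i\<ge>n. u l i = 0) \<and> (\<forall>l<k. \<forall>m<k. cinner n (u l) (u m) = (if l = m then 1 else 0))"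

definition orth_compl :: "nat \<Rightarrow> nat \<Rightarrow> (nat \<Rightarrow> nat \<Rightarrow> complex) \<Rightarrow> (nat \<Rightarrow> complex) set" where
  "orth_compl n k u = {f. (\<forall>i. n \<le> i \<longrightarrow> f i = 0) \<and> (\<forall>l. l < k \<longrightarrow> cinner n (u l) f = 0)}"

lemma closed_subspace_orth_compl: "closed_subspace n (orth_compl n k u)"
  unfolding closed_subspace_def
proof (intro conjI ballI allI)
  show "closed (orth_compl n k u)" unfolding orth_compl_def
    by (intro closed_Collect_conj closed_Collect_all closed_Collect_imp open_Collect_const
        closed_Collect_eq continuous_intros)
  show "\<And>f i. f \<in> orth_compl n k u \<Longrightarrow> n \<le> i \<longrightarrow> f i = 0" unfolding orth_compl_def by auto
  fix f g a b assume "f \<in> orth_compl n k u" "g \<in> orth_compl n k u"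
  thus "(\<lambda>i. a * f i + b * g i) \<in> orth_compl n k u" unfolding orth_compl_def by (auto simp: cinner_lin_right)
qed

lemma orth_compl_invariant:
  assumes K: "hermitian n K" and ev: "\<forall>l<k. \<exists>\<mu>. u l \<in> eigenspace n K \<mu>" and f: "f \<in> orth_compl n k u"
  shows "mat_app n K f \<in> orth_compl n k u"
proof -
  have "cinner n (u l) (mat_app n K f) = 0" if l: "l < k" for l
  proof -
    obtain \<mu> where m: "mat_app n K (u l) = (\<lambda>i. \<mu> * u l i)" using ev l unfolding eigenspace_def by blast
    have "cinner n (u l) (mat_app n K f) = cnj \<mu> * cinner n (u l) f"
      unfolding hermitian_mat_app_sym[OF K] m cinner_scale_left ..
    thus ?thesis using f l unfolding orth_compl_def by simp
  qed
  thus ?thesis unfolding orth_compl_def by (auto simp: mat_app_outside)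
qed

text \<open>If \<open>k < n\<close>, some \<open>e\<^sub>i - \<Sum>\<^sub>l \<langle>u\<^sub>l, e\<^sub>i\<rangle> u\<^sub>l\<close> is nonzero, since otherwise
  \<open>n = \<Sum>\<^sub>i \<Sum>\<^sub>l |u\<^sub>l i|\<^sup>2 = k\<close>.\<close>

lemma orth_compl_nontrivial:
  assumes on: "orthonormal n k u" and kn: "k < n"
  shows "\<exists>f\<in>orth_compl n k u. \<exists>m<n. f m \<noteq> 0"
proof -
  define res where "res i = (\<lambda>m. if m < n then (if m = i then 1 else 0) - (\<Sum>l<k. cnj (u l i) * u l m) else 0)" for i
  have res_in: "res i \<in> orth_compl n k u" if i: "i < n" for i
  proof -
    have "cinner n (u l') (res i) = 0" if l': "l' < k" for l'
    proof -
      have "cinner n (u l') (res i) = (\<Sum>m<n. cnj (u l' m) * (if m = i then 1 else 0)) -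
          (\<Sum>m<n. \<Sum>l<k. cnj (u l i) * (cnj (u l' m) * u l m))"
        unfolding cinner_def res_def
        by (simp add: sum_subtractf[symmetric] sum_distrib_left right_diff_distrib mult.left_commute)
      also have "(\<Sum>m<n. cnj (u l' m) * (if m = i then 1 else 0)) = cnj (u l' i)"
        using i by (simp add: if_distrib cong: if_cong)
      also have "(\<Sum>m<n. \<Sum>l<k. cnj (u l i) * (cnj (u l' m) * u l m)) =
           (\<Sum>l<k. cnj (u l i) * cinner n (u l') (u l))"
        unfolding cinner_def by (subst sum.swap) (simp add: sum_distrib_left)
      also have "\<dots> = (\<Sum>l<k. cnj (u l i) * (if l' = l then 1 else 0))"
        using on l' unfolding orthonormal_def by (intro sum.cong refl) auto
      also have "\<dots> = cnj (u l' i)" using l' by (simp add: if_distrib cong: if_cong)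
      finally show ?thesis by simp
    qed
    thus ?thesis unfolding orth_compl_def res_def by auto
  qed
  have "\<exists>i<n. res i i \<noteq> 0"
  proof (rule ccontr)
    assume "\<not> ?thesis"
    hence "\<forall>i<n. (\<Sum>l<k. cnj (u l i) * u l i) = 1" unfolding res_def by auto
    hence "(\<Sum>i<n. \<Sum>l<k. cnj (u l i) * u l i) = (\<Sum>i<n. (1::complex))" by simp
    also have "(\<Sum>i<n. \<Sum>l<k. cnj (u l i) * u l i) = (\<Sum>l<k. cinner n (u l) (u l))"
      unfolding cinner_def by (rule sum.swap)
    also have "\<dots> = (\<Sum>l<k. (1::complex))" using on unfolding orthonormal_def by simp
    finally have "of_nat k = (of_nat n :: complex)" by simp
    thus False using kn by simp
  qed
  thus ?thesis using res_in by blast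
qed

lemma orthonormal_extend:
  assumes on: "orthonormal n k u" and y: "y \<in> orth_compl n k u" "cinner n y y = 1"
  shows "orthonormal n (Suc k) (u(k := y))"
  unfolding orthonormal_def
proof (intro conjI allI impI)
  fix l i assume "l < Suc k" "n \<le> i"
  thus "(u(k := y)) l i = 0" using on y unfolding orthonormal_def orth_compl_def by (cases "l = k") auto
next
  fix l m assume l: "l < Suc k" and m: "m < Suc k"
  have y0: "cinner n (u l) y = 0" "cinner n y (u l) = 0" if "l < k" for l
    using y that cinner_cnj[of n "u l" y] unfolding orth_compl_def by auto
  show "cinner n ((u(k := y)) l) ((u(k := y)) m) = (if l = m then 1 else 0)"
    using l m on y0 y unfolding orthonormal_def by (cases "l = k"; cases "m = k") auto
qed

lemma orthonormal_common_eigenvectors: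
  assumes fin: "finite Ks" and hs: "\<forall>K\<in>Ks. hermitian n K" and cm: "\<forall>K\<in>Ks. \<forall>L\<in>Ks. K * L = L * K"
  shows "k \<le> n \<Longrightarrow> \<exists>u. orthonormal n k u \<and> (\<forall>l<k. \<forall>K\<in>Ks. \<exists>\<mu>. u l \<in> eigenspace n K \<mu>)"
proof (induction k)
  case 0 thus ?case by (simp add: orthonormal_def)
next
  case (Suc k)
  then obtain u where on: "orthonormal n k u" and ev: "\<forall>l<k. \<forall>K\<in>Ks. \<exists>\<mu>. u l \<in> eigenspace n K \<mu>"
    by auto
  obtain f m where "f \<in> orth_compl n k u" "m < n" "f m \<noteq> 0"
    using orth_compl_nontrivial[OF on] Suc.prems by auto
  moreover have "\<forall>K\<in>Ks. \<forall>f\<in>orth_compl n k u. mat_app n K f \<in> orth_compl n k u"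
    using orth_compl_invariant hs ev by blast
  ultimately obtain y where y: "y \<in> orth_compl n k u" "cinner n y y = 1"
    and ye: "\<forall>K\<in>Ks. \<exists>\<mu>. y \<in> eigenspace n K \<mu>"
    using common_eigenvector_in_invariant_subspace[OF fin hs cm closed_subspace_orth_compl] by blast
  have "\<forall>l<Suc k. \<forall>K\<in>Ks. \<exists>\<mu>. (u(k := y)) l \<in> eigenspace n K \<mu>"
    using ev ye by (auto simp: less_Suc_eq)
  thus ?case using orthonormal_extend[OF on y] by blast
qed

lemma common_eigenbasis:
  assumes "finite Ks" "\<forall>K\<in>Ks. hermitian n K" "\<forall>K\<in>Ks. \<forall>L\<in>Ks. K * L = L * K"
  shows "\<exists>u. orthonormal n n u \<and> (\<forall>l<n. \<forall>K\<in>Ks. \<exists>\<mu>. u l \<in> eigenspace n K \<mu>)"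
  using orthonormal_common_eigenvectors[OF assms, of n] by simp

lemma orthonormal_complete:
  assumes on: "orthonormal n n u" and i: "i < n" and j: "j < n"
  shows "(\<Sum>l<n. u l i * cnj (u l j)) = (if i = j then 1 else 0)"
proof -
  define U where "U = mat n n (\<lambda>(i,l). u l i)"
  define V where "V = mat n n (\<lambda>(l,i). cnj (u l i))"
  have U: "U \<in> carrier_mat n n" and V: "V \<in> carrier_mat n n" unfolding U_def V_def by auto
  have "V * U = 1\<^sub>m n"
  proof (rule eq_matI)
    fix l m assume "l < dim_row (1\<^sub>m n)" "m < dim_col (1\<^sub>m n)"
    hence lm: "l < n" "m < n" by auto
    have "(V * U) $$ (l,m) = (\<Sum>i<n. V $$ (l,i) * U $$ (i,m))" by (rule index_mult_square[OF V U lm])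
    also have "\<dots> = (\<Sum>i<n. cnj (u l i) * u m i)"
      using lm by (intro sum.cong refl) (simp add: V_def U_def)
    also have "\<dots> = cinner n (u l) (u m)" unfolding cinner_def ..
    finally show "(V * U) $$ (l,m) = 1\<^sub>m n $$ (l,m)" using on lm unfolding orthonormal_def by simp
  qed (use U V in auto)
  hence "U * V = 1\<^sub>m n" by (rule mat_mult_left_right_inverse[OF V U])
  hence "(U * V) $$ (i,j) = (if i = j then 1 else 0)" using i j by simp
  moreover have "(U * V) $$ (i,j) = (\<Sum>l<n. U $$ (i,l) * V $$ (l,j))" by (rule index_mult_square[OF U V i j])
  moreover have "\<dots> = (\<Sum>l<n. u l i * cnj (u l j))"
    using i j by (intro sum.cong refl) (simp add: V_def U_def)
  ultimately show ?thesis by simp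
qed

lemma eigenbasis_expansion:
  assumes on: "orthonormal n n u" and K: "K \<in> carrier_mat n n"
    and ev: "\<And>l. l < n \<Longrightarrow> u l \<in> eigenspace n K (\<mu> l)" and i: "i < n" and j: "j < n"
  shows "K $$ (i,j) = (\<Sum>l<n. \<mu> l * u l i * cnj (u l j))"
proof -
  have "K $$ (i,j) = (\<Sum>m<n. K $$ (i,m) * (if m = j then 1 else 0))"
    using j by (simp add: if_distrib cong: if_cong)
  also have "\<dots> = (\<Sum>m<n. K $$ (i,m) * (\<Sum>l<n. u l m * cnj (u l j)))"
    using orthonormal_complete[OF on _ j] by (intro sum.cong refl) simp
  also have "\<dots> = (\<Sum>l<n. (\<Sum>m<n. K $$ (i,m) * u l m) * cnj (u l j))"
    by (simp add: sum_distrib_left sum_distrib_right mult.assoc) (rule sum.swap)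
  also have "\<dots> = (\<Sum>l<n. mat_app n K (u l) i * cnj (u l j))"
    using i unfolding mat_app_def by simp
  also have "\<dots> = (\<Sum>l<n. \<mu> l * u l i * cnj (u l j))"
    using ev unfolding eigenspace_def by simp
  finally show ?thesis .
qed

lemma qform_eigenvector:
  assumes on: "orthonormal n n u" and l: "l < n" and ev: "u l \<in> eigenspace n K \<mu>"
  shows "qform n K (u l) = \<mu>"
proof -
  have "qform n K (u l) = \<mu> * cinner n (u l) (u l)"
    using ev unfolding qform_eq_cinner eigenspace_def by (simp add: cinner_scale_right)
  thus ?thesis using on l unfolding orthonormal_def by simp
qed

lemma psd_spectral_decomp:
  assumes p: "psd n Q"
  shows "\<exists>u \<mu>. orthonormal n n u \<and> (\<forall>l<n. 0 \<le> \<mu> l) \<and>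
    (\<forall>i<n. \<forall>j<n. Q $$ (i,j) = (\<Sum>l<n. complex_of_real (\<mu> l) * u l i * cnj (u l j)))"
proof -
  obtain u where on: "orthonormal n n u" and ev: "\<forall>l<n. \<exists>\<mu>. u l \<in> eigenspace n Q \<mu>"
    using common_eigenbasis[of "{Q}" n] psd_hermitian[OF p] by auto
  obtain \<mu> where m: "\<And>l. l < n \<Longrightarrow> u l \<in> eigenspace n Q (\<mu> l)"
    using ev by metis
  define r where "r l = Re (\<mu> l)" for l
  have mr: "\<mu> l = complex_of_real (r l)" if "l < n" for l
    using qform_eigenvector[OF on that m[OF that]] psdD(1)[OF p, of "u l"] unfolding r_def
    by (simp add: complex_eq_iff)
  have rpos: "0 \<le> r l" if "l < n" for l
    using qform_eigenvector[OF on that m[OF that]] psdD(2)[OF p, of "u l"] unfolding r_def by simp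
  have "Q $$ (i,j) = (\<Sum>l<n. complex_of_real (r l) * u l i * cnj (u l j))" if "i < n" "j < n" for i j
    using eigenbasis_expansion[OF on psdD(3)[OF p] m that] mr by (auto intro: sum.cong)
  thus ?thesis using on rpos by blast
qed

section \<open>Trace pairing, linear maps and their duals\<close>

definition trace_prod :: "nat \<Rightarrow> complex mat \<Rightarrow> complex mat \<Rightarrow> complex" where
  "trace_prod n A B = (\<Sum>i<n. \<Sum>j<n. A $$ (i,j) * B $$ (j,i))"

definition mat_unit :: "nat \<Rightarrow> nat \<times> nat \<Rightarrow> complex mat" where
  "mat_unit n p = mat n n (\<lambda>q. if q = p then 1 else 0)"

definition ketbra :: "nat \<Rightarrow> (nat \<Rightarrow> complex) \<Rightarrow> complex mat" where
  "ketbra n f = mat n n (\<lambda>(i,j). f i * cnj (f j))"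

definition sums_to_id :: "nat \<Rightarrow> 'a set \<Rightarrow> ('a \<Rightarrow> complex mat) \<Rightarrow> bool" where
  "sums_to_id n X P \<longleftrightarrow> (\<forall>i<n. \<forall>j<n. (\<Sum>x\<in>X. P x $$ (i,j)) = (if i = j then 1 else 0))"

lemma POVM_iff: "POVM n X P \<longleftrightarrow> (\<forall>x\<in>X. psd n (P x)) \<and> sums_to_id n X P"
  unfolding POVM_def sums_to_id_def ..

lemma mat_unit_carrier[simp]: "mat_unit n p \<in> carrier_mat n n" unfolding mat_unit_def by simp
lemma ketbra_carrier[simp]: "ketbra n f \<in> carrier_mat n n" unfolding ketbra_def by simp

lemma mtrace_carrier: "M \<in> carrier_mat n n \<Longrightarrow> mtrace M = (\<Sum>i<n. M $$ (i,i))"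
  unfolding mtrace_def by simp

lemma mtrace_smult:
  assumes M: "M \<in> carrier_mat n n" shows "mtrace (c \<cdot>\<^sub>m M) = c * mtrace M"
proof -
  have "mtrace (c \<cdot>\<^sub>m M) = (\<Sum>i<n. (c \<cdot>\<^sub>m M) $$ (i,i))" by (rule mtrace_carrier) (use M in simp)
  also have "\<dots> = c * mtrace M" using M by (simp add: sum_distrib_left mtrace_carrier)
  finally show ?thesis .
qed

lemma mtrace_ketbra: "mtrace (ketbra n f) = cinner n f f"
  unfolding mtrace_carrier[OF ketbra_carrier] cinner_def
  by (intro sum.cong refl) (simp add: ketbra_def mult.commute)

lemma mtrace_mat_unit:
  assumes "a < n" "b < n" shows "mtrace (mat_unit n (b,a)) = (if a = b then 1 else 0)"
proof -
  have "mtrace (mat_unit n (b,a)) = (\<Sum>i<n. if i = b \<and> i = a then 1 else 0)"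
    unfolding mtrace_def mat_unit_def by (intro sum.cong refl) auto
  also have "\<dots> = (if a = b then 1 else 0)"
  proof (cases "a = b")
    case True thus ?thesis using assms by simp
  next
    case False thus ?thesis by (intro trans[OF sum.neutral]) auto
  qed
  finally show ?thesis .
qed

lemma mtrace_mult:
  assumes A: "A \<in> carrier_mat n n" and B: "B \<in> carrier_mat n n"
  shows "mtrace (A * B) = trace_prod n A B"
proof -
  have "mtrace (A * B) = (\<Sum>i<n. (A * B) $$ (i,i))" by (rule mtrace_carrier) (use A B in simp)
  also have "\<dots> = trace_prod n A B"
    unfolding trace_prod_def by (intro sum.cong refl) (simp add: index_mult_square[OF A B])
  finally show ?thesis .
qed

lemma trace_prod_comm: "trace_prod n A B = trace_prod n B A"
  unfolding trace_prod_def by (subst sum.swap) (simp add: mult.commute)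

lemma trace_prod_lincomb_right:
  "X \<in> carrier_mat n n \<Longrightarrow> Y \<in> carrier_mat n n \<Longrightarrow>
   trace_prod n G (a \<cdot>\<^sub>m X + b \<cdot>\<^sub>m Y) = a * trace_prod n G X + b * trace_prod n G Y"
  unfolding trace_prod_def by (simp add: sum.distrib sum_distrib_left algebra_simps)

lemma trace_prod_smult_right: "X \<in> carrier_mat n n \<Longrightarrow> trace_prod n M (c \<cdot>\<^sub>m X) = c * trace_prod n M X"
  unfolding trace_prod_def by (simp add: sum_distrib_left mult_ac)

lemma qform_eq_trace_prod: "qform n A f = trace_prod n A (ketbra n f)"
  unfolding qform_def trace_prod_def ketbra_def
  by (intro sum.cong refl) (simp add: mult.commute mult.left_commute)

lemma sum_trace_prod_sums_to_id:
  assumes P: "sums_to_id d X P" and S: "S \<in> carrier_mat d d"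
  shows "(\<Sum>x\<in>X. trace_prod d (P x) S) = mtrace S"
proof -
  have "(\<Sum>x\<in>X. trace_prod d (P x) S) = (\<Sum>i<d. \<Sum>j<d. (\<Sum>x\<in>X. P x $$ (i,j)) * S $$ (j,i))"
    unfolding trace_prod_def by (simp add: sum_distrib_right) (subst sum.swap, intro sum.cong refl, subst sum.swap, simp)
  also have "\<dots> = (\<Sum>i<d. \<Sum>j<d. if i = j then S $$ (j,i) else 0)"
    using P unfolding sums_to_id_def by (intro sum.cong refl) simp
  also have "\<dots> = mtrace S" using S by (simp add: mtrace_carrier)
  finally show ?thesis .
qed

lemma psd_ketbra: "psd n (ketbra n f)"
  unfolding psd_iff_qform
proof (intro conjI allI ketbra_carrier)
  fix g
  have "qform n (ketbra n f) g = (\<Sum>i<n. cnj (g i) * f i) * (\<Sum>j<n. cnj (f j) * g j)"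
    unfolding qform_def ketbra_def by (simp add: sum_product mult.commute mult.left_commute)
  also have "\<dots> = cinner n g f * cnj (cinner n g f)" unfolding cinner_def cnj_sum by (simp add: mult.commute)
  also have "\<dots> = complex_of_real ((cmod (cinner n g f))^2)" by (rule complex_norm_square[symmetric])
  finally have e: "qform n (ketbra n f) g = complex_of_real ((cmod (cinner n g f))^2)" .
  show "Im (qform n (ketbra n f) g) = 0" "0 \<le> Re (qform n (ketbra n f) g)" unfolding e by simp_all
qed

lemma psd_scale: assumes "psd n M" "0 \<le> c" shows "psd n (complex_of_real c \<cdot>\<^sub>m M)"
proof -
  have M: "M \<in> carrier_mat n n" using assms psdD(3) by blast
  have "qform n (complex_of_real c \<cdot>\<^sub>m M) f = complex_of_real c * qform n M f" for f
    unfolding qform_def using M by (simp add: sum_distrib_left mult_ac)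
  thus ?thesis using assms M unfolding psd_iff_qform by auto
qed

lemma psd_one: "psd n (1\<^sub>m n)"
  unfolding psd_iff_qform
proof (intro conjI allI)
  fix f
  have "qform n (1\<^sub>m n) f = (\<Sum>i<n. \<Sum>j<n. if i = j then cnj (f i) * f j else 0)"
    unfolding qform_def by (intro sum.cong refl) simp
  also have "\<dots> = cinner n f f" unfolding cinner_def by simp
  finally show "Im (qform n (1\<^sub>m n) f) = 0" "0 \<le> Re (qform n (1\<^sub>m n) f)" using cinner_self_real[of n f] by auto
qed simp

lemma psd_zero: "psd n (0\<^sub>m n n)"
  unfolding psd_iff_qform by (simp add: qform_def)

lemma sum_rotate3: "(\<Sum>r\<in>R. \<Sum>s\<in>S. \<Sum>l\<in>L. F r s l) = (\<Sum>l\<in>L. \<Sum>r\<in>R. \<Sum>s\<in>S. F r s l)"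
  by (subst sum.swap) (simp add: sum.swap[of _ S])

lemma trace_prod_psd_expansion:
  assumes G: "psd n G"
  obtains g w where "\<forall>t<n. 0 \<le> g t" "\<And>B. trace_prod n G B = (\<Sum>t<n. complex_of_real (g t) * qform n B (w t))"
proof -
  obtain w g where g: "\<forall>l<n. 0 \<le> g l"
    and Ge: "\<forall>i<n. \<forall>j<n. G $$ (i,j) = (\<Sum>l<n. complex_of_real (g l) * w l i * cnj (w l j))"
    using psd_spectral_decomp[OF G] by blast
  have "trace_prod n G B = (\<Sum>t<n. complex_of_real (g t) * qform n B (w t))" for B
  proof -
    have "trace_prod n G B = (\<Sum>i<n. \<Sum>j<n. (\<Sum>l<n. complex_of_real (g l) * w l i * cnj (w l j)) * B $$ (j,i))"
      unfolding trace_prod_def using Ge by (intro sum.cong refl) simp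
    also have "\<dots> = (\<Sum>i<n. \<Sum>j<n. \<Sum>l<n. complex_of_real (g l) * (cnj (w l j) * B $$ (j,i) * w l i))"
      by (intro sum.cong refl) (simp add: sum_distrib_left sum_distrib_right mult_ac)
    also have "\<dots> = (\<Sum>l<n. \<Sum>j<n. \<Sum>i<n. complex_of_real (g l) * (cnj (w l j) * B $$ (j,i) * w l i))"
      by (subst (2) sum.swap, subst sum.swap, subst (2) sum.swap) (rule refl)
    also have "\<dots> = (\<Sum>t<n. complex_of_real (g t) * qform n B (w t))"
      unfolding qform_def by (simp add: sum_distrib_left)
    finally show ?thesis .
  qed
  thus ?thesis using g that by blast
qed

lemma Im_Re_sum_nonneg:
  fixes g :: "'a \<Rightarrow> complex"
  assumes "\<And>x. x \<in> S \<Longrightarrow> Im (g x) = 0 \<and> 0 \<le> Re (g x)"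
  shows "Im (sum g S) = 0 \<and> 0 \<le> Re (sum g S)"
  using assms by (simp add: Im_sum Re_sum sum_nonneg)

lemma trace_prod_psd:
  assumes P: "psd n P" and Q: "psd n Q"
  shows "Im (trace_prod n P Q) = 0 \<and> 0 \<le> Re (trace_prod n P Q)"
proof -
  obtain g w where g: "\<forall>t<n. 0 \<le> g t"
    and e: "trace_prod n Q P = (\<Sum>t<n. complex_of_real (g t) * qform n P (w t))"
    using trace_prod_psd_expansion[OF Q] by metis
  have "Im (\<Sum>t<n. complex_of_real (g t) * qform n P (w t)) = 0 \<and>
        0 \<le> Re (\<Sum>t<n. complex_of_real (g t) * qform n P (w t))"
    by (rule Im_Re_sum_nonneg) (use g psdD(1,2)[OF P] in auto)
  thus ?thesis unfolding trace_prod_comm[of n P] e .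
qed

lemma lin_map_carrier: "lin_map dA dB N \<Longrightarrow> X \<in> carrier_mat dA dA \<Longrightarrow> N X \<in> carrier_mat dB dB"
  unfolding lin_map_def by blast

lemma lin_map_lincomb: "lin_map dA dB N \<Longrightarrow> X \<in> carrier_mat dA dA \<Longrightarrow> Y \<in> carrier_mat dA dA \<Longrightarrow>
   N (a \<cdot>\<^sub>m X + b \<cdot>\<^sub>m Y) = a \<cdot>\<^sub>m N X + b \<cdot>\<^sub>m N Y"
  unfolding lin_map_def by blast

lemma lin_map_smult:
  assumes L: "lin_map dA dB N" and X: "X \<in> carrier_mat dA dA"
  shows "N (a \<cdot>\<^sub>m X) = a \<cdot>\<^sub>m N X"
proof -
  have "a \<cdot>\<^sub>m X = a \<cdot>\<^sub>m X + 0 \<cdot>\<^sub>m X" using X by (intro eq_matI) auto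
  hence "N (a \<cdot>\<^sub>m X) = a \<cdot>\<^sub>m N X + 0 \<cdot>\<^sub>m N X" using lin_map_lincomb[OF L X X] by metis
  also have "\<dots> = a \<cdot>\<^sub>m N X" using lin_map_carrier[OF L X] by (intro eq_matI) auto
  finally show ?thesis .
qed

lemma lin_map_zero:
  assumes L: "lin_map dA dB N"
  shows "N (mat dA dA (\<lambda>_. 0)) = mat dB dB (\<lambda>_. 0)"
proof -
  have Z: "mat dA dA (\<lambda>_. 0) \<in> carrier_mat dA dA" by simp
  have "mat dA dA (\<lambda>_. 0::complex) = 0 \<cdot>\<^sub>m mat dA dA (\<lambda>_. 0)" by (rule eq_matI) auto
  hence "N (mat dA dA (\<lambda>_. 0)) = 0 \<cdot>\<^sub>m N (mat dA dA (\<lambda>_. 0))"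
    using lin_map_smult[OF L Z] by metis
  also have "\<dots> = mat dB dB (\<lambda>_. 0)" using lin_map_carrier[OF L Z] by (intro eq_matI) auto
  finally show ?thesis .
qed

lemma lin_map_sum:
  assumes L: "lin_map dA dB N" and fin: "finite T"
  shows "(\<forall>t\<in>T. X t \<in> carrier_mat dA dA) \<Longrightarrow>
    N (mat dA dA (\<lambda>q. \<Sum>t\<in>T. c t * X t $$ q)) = mat dB dB (\<lambda>q. \<Sum>t\<in>T. c t * N (X t) $$ q)"
  using fin
proof (induction T rule: finite_induct)
  case empty
  show ?case using lin_map_zero[OF L] by simp
next
  case (insert t T)
  define M where "M = mat dA dA (\<lambda>q. \<Sum>t\<in>T. c t * X t $$ q)"
  have M: "M \<in> carrier_mat dA dA" unfolding M_def by simp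
  have Xt: "X t \<in> carrier_mat dA dA" using insert by simp
  have "mat dA dA (\<lambda>q. \<Sum>t\<in>insert t T. c t * X t $$ q) = c t \<cdot>\<^sub>m X t + 1 \<cdot>\<^sub>m M"
    using insert(1,2) Xt unfolding M_def by (intro eq_matI) auto
  hence "N (mat dA dA (\<lambda>q. \<Sum>t\<in>insert t T. c t * X t $$ q)) = c t \<cdot>\<^sub>m N (X t) + 1 \<cdot>\<^sub>m N M"
    using lin_map_lincomb[OF L Xt M] by simp
  also have "N M = mat dB dB (\<lambda>q. \<Sum>t\<in>T. c t * N (X t) $$ q)" unfolding M_def using insert by simp
  also have "c t \<cdot>\<^sub>m N (X t) + 1 \<cdot>\<^sub>m mat dB dB (\<lambda>q. \<Sum>t\<in>T. c t * N (X t) $$ q) =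
     mat dB dB (\<lambda>q. \<Sum>t\<in>insert t T. c t * N (X t) $$ q)"
    using insert(1,2) lin_map_carrier[OF L Xt] by (intro eq_matI) auto
  finally show ?case .
qed

definition index_pairs :: "nat \<Rightarrow> (nat \<times> nat) set" where "index_pairs n = {..<n} \<times> {..<n}"

lemma finite_index_pairs[simp]: "finite (index_pairs n)" unfolding index_pairs_def by simp

lemma mat_eq_sum_mat_unit:
  assumes X: "X \<in> carrier_mat n n"
  shows "X = mat n n (\<lambda>q. \<Sum>p\<in>index_pairs n. X $$ p * mat_unit n p $$ q)"
proof (rule eq_matI)
  fix i j assume "i < dim_row (mat n n (\<lambda>q. \<Sum>p\<in>index_pairs n. X $$ p * mat_unit n p $$ q))"
    "j < dim_col (mat n n (\<lambda>q. \<Sum>p\<in>index_pairs n. X $$ p * mat_unit n p $$ q))"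
  hence ij: "i < n" "j < n" by auto
  have "(\<Sum>p\<in>index_pairs n. X $$ p * mat_unit n p $$ (i,j)) = (\<Sum>p\<in>index_pairs n. if (i,j) = p then X $$ p else 0)"
    using ij unfolding mat_unit_def index_pairs_def by (intro sum.cong refl) auto
  also have "\<dots> = X $$ (i,j)" using ij by (simp add: index_pairs_def)
  finally show "X $$ (i,j) = mat n n (\<lambda>q. \<Sum>p\<in>index_pairs n. X $$ p * mat_unit n p $$ q) $$ (i,j)" using ij by simp
qed (use X in auto)

lemma lin_map_expand:
  assumes L: "lin_map dA dB N" and X: "X \<in> carrier_mat dA dA"
  shows "N X = mat dB dB (\<lambda>q. \<Sum>p\<in>index_pairs dA. X $$ p * N (mat_unit dA p) $$ q)"
  using lin_map_sum[OF L finite_index_pairs[of dA], where X = "mat_unit dA" and c = "\<lambda>p. X $$ p"]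
    mat_eq_sum_mat_unit[OF X] by simp

lemma lin_map_comp: "lin_map dA dB N \<Longrightarrow> lin_map dB dC M \<Longrightarrow> lin_map dA dC (\<lambda>X. M (N X))"
  unfolding lin_map_def by auto

lemma ampliate_1:
  assumes L: "lin_map dA dB N" and X: "X \<in> carrier_mat dA dA"
  shows "ampliate 1 dA dB N X = N X"
proof -
  have b: "block dA X 0 0 = X" using X unfolding block_def by (intro eq_matI) auto
  show ?thesis unfolding ampliate_def using lin_map_carrier[OF L X]
    by (intro eq_matI) (auto simp: b)
qed

lemma CPTP_psd: "CPTP dA dB N \<Longrightarrow> psd dA X \<Longrightarrow> psd dB (N X)"
proof -
  assume C: "CPTP dA dB N" and X: "psd dA X"
  hence L: "lin_map dA dB N" and cp: "completely_positive dA dB N" by (auto simp: CPTP_def)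
  have "psd (1 * dB) (ampliate 1 dA dB N X)" using cp X unfolding completely_positive_def by (metis mult_1)
  thus ?thesis using ampliate_1[OF L psdD(3)[OF X]] by simp
qed

lemma CPTP_density: "CPTP dA dB N \<Longrightarrow> density dA X \<Longrightarrow> density dB (N X)"
  unfolding density_def CPTP_def trace_preserving_def
  using CPTP_psd[unfolded CPTP_def trace_preserving_def] psdD(3) by metis

text \<open>The Heisenberg-picture dual \<open>N\<^sup>\<dagger>\<close>, characterised by \<open>tr(N\<^sup>\<dagger>(Y) X) = tr(Y N(X))\<close>.\<close>

definition dual_map :: "nat \<Rightarrow> nat \<Rightarrow> (complex mat \<Rightarrow> complex mat) \<Rightarrow> complex mat \<Rightarrow> complex mat" where
  "dual_map dA dB N Y = mat dA dA (\<lambda>(a,b). trace_prod dB Y (N (mat_unit dA (b,a))))"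

lemma dual_map_carrier[simp]: "dual_map dA dB N Y \<in> carrier_mat dA dA" unfolding dual_map_def by simp

lemma trace_prod_lin_map_expand:
  assumes L: "lin_map dA dB N" and X: "X \<in> carrier_mat dA dA"
  shows "trace_prod dB Y (N X) = (\<Sum>p\<in>index_pairs dA. X $$ p * trace_prod dB Y (N (mat_unit dA p)))"
proof -
  have "trace_prod dB Y (N X) = (\<Sum>i<dB. \<Sum>j<dB. \<Sum>p\<in>index_pairs dA. X $$ p * (Y $$ (i,j) * N (mat_unit dA p) $$ (j,i)))"
    unfolding trace_prod_def by (subst lin_map_expand[OF L X]) (simp add: sum_distrib_left mult.left_commute)
  also have "\<dots> = (\<Sum>p\<in>index_pairs dA. \<Sum>i<dB. \<Sum>j<dB. X $$ p * (Y $$ (i,j) * N (mat_unit dA p) $$ (j,i)))"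
    by (subst (2) sum.swap, subst sum.swap) (rule refl)
  also have "\<dots> = (\<Sum>p\<in>index_pairs dA. X $$ p * trace_prod dB Y (N (mat_unit dA p)))"
    unfolding trace_prod_def by (simp add: sum_distrib_left)
  finally show ?thesis .
qed

lemma trace_prod_dual_map:
  assumes L: "lin_map dA dB N" and X: "X \<in> carrier_mat dA dA"
  shows "trace_prod dA (dual_map dA dB N Y) X = trace_prod dB Y (N X)"
proof -
  have "trace_prod dA (dual_map dA dB N Y) X = (\<Sum>a<dA. \<Sum>b<dA. trace_prod dB Y (N (mat_unit dA (b,a))) * X $$ (b,a))"
    unfolding trace_prod_def dual_map_def by (intro sum.cong refl) simp
  also have "\<dots> = (\<Sum>b<dA. \<Sum>a<dA. X $$ (b,a) * trace_prod dB Y (N (mat_unit dA (b,a))))"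
    by (subst sum.swap) (simp add: mult.commute)
  also have "\<dots> = (\<Sum>p\<in>index_pairs dA. X $$ p * trace_prod dB Y (N (mat_unit dA p)))"
    unfolding index_pairs_def sum.cartesian_product' ..
  also have "\<dots> = trace_prod dB Y (N X)" by (rule trace_prod_lin_map_expand[OF L X, symmetric])
  finally show ?thesis .
qed

lemma dual_map_psd:
  assumes C: "CPTP dA dB N" and Y: "psd dB Y"
  shows "psd dA (dual_map dA dB N Y)"
  unfolding psd_iff_qform
proof (intro conjI allI dual_map_carrier)
  fix f
  have L: "lin_map dA dB N" using C by (simp add: CPTP_def)
  have e: "qform dA (dual_map dA dB N Y) f = trace_prod dB Y (N (ketbra dA f))"
    unfolding qform_eq_trace_prod by (rule trace_prod_dual_map[OF L ketbra_carrier])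
  from trace_prod_psd[OF Y CPTP_psd[OF C psd_ketbra]]
  show "Im (qform dA (dual_map dA dB N Y) f) = 0" "0 \<le> Re (qform dA (dual_map dA dB N Y) f)"
    unfolding e by auto
qed

lemma dual_map_sums_to_id:
  assumes C: "CPTP dA dB N" and P: "sums_to_id dB X P"
  shows "sums_to_id dA X (\<lambda>x. dual_map dA dB N (P x))"
  unfolding sums_to_id_def
proof (intro allI impI)
  fix a b assume a: "a < dA" and b: "b < dA"
  have L: "lin_map dA dB N" and T: "trace_preserving dA N" using C by (auto simp: CPTP_def)
  have "(\<Sum>x\<in>X. dual_map dA dB N (P x) $$ (a,b)) = (\<Sum>x\<in>X. trace_prod dB (P x) (N (mat_unit dA (b,a))))"
    unfolding dual_map_def using a b by simp
  also have "\<dots> = mtrace (N (mat_unit dA (b,a)))"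
    by (rule sum_trace_prod_sums_to_id[OF P lin_map_carrier[OF L mat_unit_carrier]])
  also have "\<dots> = mtrace (mat_unit dA (b,a))" using T unfolding trace_preserving_def by simp
  finally show "(\<Sum>x\<in>X. dual_map dA dB N (P x) $$ (a,b)) = (if a = b then 1 else 0)"
    using mtrace_mat_unit[OF a b] by simp
qed

lemma dual_map_POVM: "CPTP dA dB N \<Longrightarrow> POVM dB X P \<Longrightarrow> POVM dA X (\<lambda>x. dual_map dA dB N (P x))"
  unfolding POVM_iff using dual_map_psd dual_map_sums_to_id by blast

section \<open>Guessing probabilities\<close>

definition success_prob :: "nat set \<Rightarrow> (nat \<Rightarrow> real) \<Rightarrow> (nat \<Rightarrow> complex mat) \<Rightarrow> (nat \<Rightarrow> complex mat) \<Rightarrow> real" where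
  "success_prob X p \<sigma> P = (\<Sum>x\<in>X. p x * Re (mtrace (P x * \<sigma> x)))"

lemma P_guess_eq_Sup: "P_guess d X p \<sigma> = Sup (success_prob X p \<sigma> ` Collect (POVM d X))"
  unfolding P_guess_def success_prob_def by (rule arg_cong[where f = Sup]) auto

lemma ensemble_CPTP: "ensemble dA X p \<rho> \<Longrightarrow> CPTP dA dB N \<Longrightarrow> ensemble dB X p (\<lambda>x. N (\<rho> x))"
  unfolding ensemble_def using CPTP_density by blast

lemma success_prob_le_1:
  assumes ens: "ensemble d X p \<sigma>" and P: "POVM d X P"
  shows "success_prob X p \<sigma> P \<le> 1"
proof -
  have fin: "finite X" and p: "\<forall>x\<in>X. 0 \<le> p x" and s1: "(\<Sum>x\<in>X. p x) = 1"
    and \<sigma>: "\<forall>x\<in>X. density d (\<sigma> x)"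
    using ens unfolding ensemble_def by auto
  have Pc: "\<And>y. y \<in> X \<Longrightarrow> P y \<in> carrier_mat d d" using P psdD(3) unfolding POVM_def by blast
  have one: "Re (mtrace (P x * \<sigma> x)) \<le> 1" if x: "x \<in> X" for x
  proof -
    have sx: "psd d (\<sigma> x)" "mtrace (\<sigma> x) = 1" using \<sigma> x by (auto simp: density_def)
    have "(\<Sum>y\<in>X. trace_prod d (P y) (\<sigma> x)) = 1"
      using sum_trace_prod_sums_to_id[OF _ psdD(3)[OF sx(1)]] P sx(2) unfolding POVM_iff by metis
    hence "(\<Sum>y\<in>X. Re (trace_prod d (P y) (\<sigma> x))) = 1" by (metis Re_sum one_complex.sel(1))
    moreover have "Re (trace_prod d (P x) (\<sigma> x)) \<le> (\<Sum>y\<in>X. Re (trace_prod d (P y) (\<sigma> x)))"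
      by (rule member_le_sum)
        (use x fin P trace_prod_psd[OF _ sx(1)] in \<open>auto simp: POVM_iff\<close>)
    ultimately show ?thesis by (simp add: mtrace_mult[OF Pc[OF x] psdD(3)[OF sx(1)]])
  qed
  have "success_prob X p \<sigma> P \<le> (\<Sum>x\<in>X. p x * 1)" unfolding success_prob_def
    by (rule sum_mono) (use p one in \<open>auto intro: mult_left_le\<close>)
  thus ?thesis using s1 by simp
qed

lemma POVM_trivial:
  assumes fin: "finite X" and x0: "x0 \<in> X"
  shows "POVM d X (\<lambda>x. if x = x0 then 1\<^sub>m d else 0\<^sub>m d d)"
  unfolding POVM_iff sums_to_id_def
proof (intro conjI ballI allI impI)
  fix x assume "x \<in> X"
  show "psd d (if x = x0 then 1\<^sub>m d else 0\<^sub>m d d)" using psd_one psd_zero by simp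
next
  fix i j assume ij: "i < d" "j < d"
  have "(\<Sum>x\<in>X. (if x = x0 then 1\<^sub>m d else 0\<^sub>m d d) $$ (i,j)) = (\<Sum>x\<in>X. if x = x0 then 1\<^sub>m d $$ (i,j) else 0)"
    using ij by (intro sum.cong refl) simp
  also have "\<dots> = (if i = j then 1 else 0)" using fin x0 ij by simp
  finally show "(\<Sum>x\<in>X. (if x = x0 then 1\<^sub>m d else 0\<^sub>m d d) $$ (i,j)) = (if i = j then 1 else 0)" .
qed

lemma success_prob_le_P_guess:
  assumes "ensemble d X p \<sigma>" "POVM d X P"
  shows "success_prob X p \<sigma> P \<le> P_guess d X p \<sigma>"
  unfolding P_guess_eq_Sup
proof (rule cSup_upper)
  show "bdd_above (success_prob X p \<sigma> ` Collect (POVM d X))"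
    using success_prob_le_1[OF assms(1)] by (intro bdd_aboveI) blast
qed (use assms(2) in simp)

lemma P_guess_le:
  assumes ens: "ensemble d X p \<sigma>" and le: "\<And>P. POVM d X P \<Longrightarrow> success_prob X p \<sigma> P \<le> b"
  shows "P_guess d X p \<sigma> \<le> b"
proof -
  obtain x0 where "x0 \<in> X" "finite X" using ens unfolding ensemble_def by force
  hence "Collect (POVM d X) \<noteq> {}" using POVM_trivial by blast
  thus ?thesis unfolding P_guess_eq_Sup by (intro cSup_least) (use le in auto)
qed

lemma mtrace_mult_lin_map:
  assumes L: "lin_map dA dB N" and P: "P \<in> carrier_mat dB dB" and X: "X \<in> carrier_mat dA dA"
  shows "mtrace (P * N X) = trace_prod dA (dual_map dA dB N P) X"
  by (simp add: mtrace_mult[OF P lin_map_carrier[OF L X]] trace_prod_dual_map[OF L X])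

lemma success_prob_dual_map:
  assumes L: "lin_map dA dB N" and \<rho>: "\<forall>x\<in>X. \<rho> x \<in> carrier_mat dA dA" and P: "\<forall>x\<in>X. P x \<in> carrier_mat dB dB"
  shows "success_prob X p (\<lambda>x. N (\<rho> x)) P = success_prob X p \<rho> (\<lambda>x. dual_map dA dB N (P x))"
  unfolding success_prob_def using \<rho> P
  by (intro sum.cong refl) (simp add: mtrace_mult_lin_map[OF L] mtrace_mult[OF dual_map_carrier])

lemma more_informative_if_factorizes:
  assumes N: "CPTP dA dB N" and N': "CPTP dA dB' N'" and C: "CPTP dB dB' C"
    and eq: "\<forall>X \<in> carrier_mat dA dA. N' X = C (N X)"
  shows "more_informative dA dB N dB' N'"
  unfolding more_informative_def
proof (intro allI impI)
  fix X p \<rho> assume ens: "ensemble dA X p \<rho>"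
  have \<rho>c: "\<forall>x\<in>X. \<rho> x \<in> carrier_mat dA dA" using ens psdD(3) unfolding ensemble_def density_def by blast
  have LC: "lin_map dB dB' C" using C by (simp add: CPTP_def)
  show "P_guess dB' X p (\<lambda>x. N' (\<rho> x)) \<le> P_guess dB X p (\<lambda>x. N (\<rho> x))"
  proof (rule P_guess_le[OF ensemble_CPTP[OF ens N']])
    fix P' assume P': "POVM dB' X P'"
    have "success_prob X p (\<lambda>x. N' (\<rho> x)) P' = success_prob X p (\<lambda>x. C (N (\<rho> x))) P'"
      unfolding success_prob_def using eq \<rho>c by simp
    also have "\<dots> = success_prob X p (\<lambda>x. N (\<rho> x)) (\<lambda>x. dual_map dB dB' C (P' x))"
      using P' \<rho>c lin_map_carrier[of dA dB N] N psdD(3)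
      by (intro success_prob_dual_map[OF LC]) (auto simp: CPTP_def POVM_def)
    also have "\<dots> \<le> P_guess dB X p (\<lambda>x. N (\<rho> x))"
      by (rule success_prob_le_P_guess[OF ensemble_CPTP[OF ens N] dual_map_POVM[OF C P']])
    finally show "success_prob X p (\<lambda>x. N' (\<rho> x)) P' \<le> P_guess dB X p (\<lambda>x. N (\<rho> x))" .
  qed
qed

section \<open>Measure-and-prepare channels\<close>

text \<open>\<open>meas_prep n n' m G S\<close> measures the POVM \<open>G\<^sub>0, \<dots>, G\<^sub>m\<^sub>-\<^sub>1\<close> on \<open>\<complex>\<^sup>n\<close> and prepares \<open>S\<^sub>l\<close> on outcome \<open>l\<close>.\<close>

definition meas_prep ::
  "nat \<Rightarrow> nat \<Rightarrow> nat \<Rightarrow> (nat \<Rightarrow> complex mat) \<Rightarrow> (nat \<Rightarrow> complex mat) \<Rightarrow> complex mat \<Rightarrow> complex mat" where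
  "meas_prep n n' m G S Z = mat n' n' (\<lambda>q. \<Sum>l<m. trace_prod n (G l) Z * S l $$ q)"

lemma lin_map_meas_prep: "lin_map n n' (meas_prep n n' m G S)"
  unfolding lin_map_def
proof (intro conjI ballI allI)
  fix X :: "complex mat" assume "X \<in> carrier_mat n n"
  show "meas_prep n n' m G S X \<in> carrier_mat n' n'" unfolding meas_prep_def by simp
next
  fix X Y :: "complex mat" and a b assume X: "X \<in> carrier_mat n n" and Y: "Y \<in> carrier_mat n n"
  show "meas_prep n n' m G S (a \<cdot>\<^sub>m X + b \<cdot>\<^sub>m Y) = a \<cdot>\<^sub>m meas_prep n n' m G S X + b \<cdot>\<^sub>m meas_prep n n' m G S Y"
    unfolding meas_prep_def trace_prod_lincomb_right[OF X Y]
    by (intro eq_matI) (auto simp: sum.distrib sum_distrib_left algebra_simps)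
qed

lemma trace_preserving_meas_prep:
  assumes G: "sums_to_id n {..<m} G" and S: "\<forall>l<m. S l \<in> carrier_mat n' n' \<and> mtrace (S l) = 1"
  shows "trace_preserving n (meas_prep n n' m G S)"
  unfolding trace_preserving_def
proof (intro ballI)
  fix Z :: "complex mat" assume Z: "Z \<in> carrier_mat n n"
  have "mtrace (meas_prep n n' m G S Z) = (\<Sum>l<m. trace_prod n (G l) Z * (\<Sum>i<n'. S l $$ (i,i)))"
    unfolding meas_prep_def mtrace_def by (simp add: sum_distrib_left) (rule sum.swap)
  also have "\<dots> = (\<Sum>l<m. trace_prod n (G l) Z)" using S by (intro sum.cong refl) (auto simp: mtrace_carrier)
  also have "\<dots> = mtrace Z" by (rule sum_trace_prod_sums_to_id[OF G Z])
  finally show "mtrace (meas_prep n n' m G S Z) = mtrace Z" .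
qed

lemma sum_split_blocks: fixes k n :: nat shows "(\<Sum>i<k*n. F i) = (\<Sum>p<k. \<Sum>a<n. F (p*n + a))"
proof -
  have "(\<Sum>i<k*n. F i) = (\<Sum>p<k. \<Sum>i\<in>{p*n..<p*n+n}. F i)" using sum.nat_group[of F n k] by simp
  also have "\<dots> = (\<Sum>p<k. \<Sum>a<n. F (p*n+a))"
  proof (rule sum.cong[OF refl])
    fix p
    have "{p*n..<p*n+n} = {0+p*n..<n+p*n}" by (simp add: add.commute)
    hence "(\<Sum>i\<in>{p*n..<p*n+n}. F i) = (\<Sum>a\<in>{0..<n}. F (a + p*n))" by (simp only: sum.shift_bounds_nat_ivl)
    thus "(\<Sum>i\<in>{p*n..<p*n+n}. F i) = (\<Sum>a<n. F (p*n+a))" by (simp add: atLeast0LessThan add.commute)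
  qed
  finally show ?thesis .
qed

lemma block_index_less: assumes "p < (k::nat)" "r < n" shows "p*n + r < k*n"
proof -
  have "p*n + r < Suc p * n" using assms by simp
  also have "\<dots> \<le> k * n" using assms by (intro mult_le_mono1) simp
  finally show ?thesis .
qed

lemma block_index_div_mod: "a < (n::nat) \<Longrightarrow> (p*n + a) div n = p" "a < n \<Longrightarrow> (p*n + a) mod n = a"
  by auto

lemma qform_blocks:
  "(\<Sum>p<k. \<Sum>q<k. cnj (\<alpha> p) * qform n (block n M p q) w * \<alpha> q) =
   qform (k*n) M (\<lambda>i. \<alpha> (i div n) * w (i mod n))"
proof -
  have "qform (k*n) M (\<lambda>i. \<alpha> (i div n) * w (i mod n)) =
     (\<Sum>p<k. \<Sum>a<n. \<Sum>q<k. \<Sum>b<n. cnj (\<alpha> p * w a) * M $$ (p*n+a, q*n+b) * (\<alpha> q * w b))"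
    unfolding qform_def sum_split_blocks by (intro sum.cong refl) (simp add: block_index_div_mod)
  also have "\<dots> = (\<Sum>p<k. \<Sum>q<k. \<Sum>a<n. \<Sum>b<n. cnj (\<alpha> p * w a) * M $$ (p*n+a, q*n+b) * (\<alpha> q * w b))"
    by (rule sum.cong[OF refl], rule sum.swap)
  also have "\<dots> = (\<Sum>p<k. \<Sum>q<k. cnj (\<alpha> p) * qform n (block n M p q) w * \<alpha> q)"
    unfolding qform_def block_def
    by (intro sum.cong refl) (simp add: sum_distrib_left sum_distrib_right mult_ac)
  finally show ?thesis by simp
qed

text \<open>Expanding the positive \<open>G\<close> reduces \<open>\<Sum>\<^sub>p\<^sub>q \<alpha>\<^sub>p\<^sup>* tr(G M\<^sub>p\<^sub>q) \<alpha>\<^sub>q\<close> to quadratic forms of the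
  positive block matrix \<open>M\<close> at vectors \<open>\<alpha> \<otimes> w\<close>.\<close>

lemma trace_prod_blocks_psd:
  assumes G: "psd n G" and M: "psd (k*n) M"
  shows "Im (\<Sum>p<k. \<Sum>q<k. cnj (\<alpha> p) * trace_prod n G (block n M p q) * \<alpha> q) = 0 \<and>
         0 \<le> Re (\<Sum>p<k. \<Sum>q<k. cnj (\<alpha> p) * trace_prod n G (block n M p q) * \<alpha> q)"
proof -
  obtain g w where g: "\<forall>t<n. 0 \<le> g t"
    and e: "\<And>B. trace_prod n G B = (\<Sum>t<n. complex_of_real (g t) * qform n B (w t))"
    using trace_prod_psd_expansion[OF G] by metis
  have "(\<Sum>p<k. \<Sum>q<k. cnj (\<alpha> p) * trace_prod n G (block n M p q) * \<alpha> q) =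
      (\<Sum>t<n. complex_of_real (g t) * (\<Sum>p<k. \<Sum>q<k. cnj (\<alpha> p) * qform n (block n M p q) (w t) * \<alpha> q))"
    unfolding e by (simp add: sum_distrib_left sum_distrib_right mult_ac) (subst sum.swap, subst (2) sum.swap, rule refl)
  also have "\<dots> = (\<Sum>t<n. complex_of_real (g t) * qform (k*n) M (\<lambda>i. \<alpha> (i div n) * w t (i mod n)))"
    by (simp add: qform_blocks)
  finally show ?thesis by (simp only:) (rule Im_Re_sum_nonneg, use g psdD(1,2)[OF M] in auto)
qed

lemma ampliate_meas_prep_index:
  assumes i: "i < k*n'" and j: "j < k*n'"
  shows "ampliate k n n' (meas_prep n n' m G (\<lambda>l. ketbra n' (v l))) M $$ (i,j) =
    (\<Sum>l<m. trace_prod n (G l) (block n M (i div n') (j div n')) * (v l (i mod n') * cnj (v l (j mod n'))))"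
proof -
  have n': "n' > 0" using i by (cases n') auto
  show ?thesis using i j n' unfolding ampliate_def meas_prep_def ketbra_def by simp
qed

lemma qform_ampliate_meas_prep:
  fixes f :: "nat \<Rightarrow> complex" and v :: "nat \<Rightarrow> nat \<Rightarrow> complex" and n' :: nat
  defines "\<alpha> l p \<equiv> \<Sum>s<n'. cnj (v l s) * f (p*n' + s)"
  shows "qform (k*n') (ampliate k n n' (meas_prep n n' m G (\<lambda>l. ketbra n' (v l))) M) f =
    (\<Sum>l<m. \<Sum>p<k. \<Sum>q<k. cnj (\<alpha> l p) * trace_prod n (G l) (block n M p q) * \<alpha> l q)"
proof -
  let ?A = "ampliate k n n' (meas_prep n n' m G (\<lambda>l. ketbra n' (v l))) M"
  define T where "T l p q = trace_prod n (G l) (block n M p q)" for l p q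
  have "qform (k*n') ?A f = (\<Sum>p<k. \<Sum>r<n'. \<Sum>q<k. \<Sum>s<n'.
      cnj (f (p*n'+r)) * (\<Sum>l<m. T l p q * (v l r * cnj (v l s))) * f (q*n'+s))"
    unfolding qform_def sum_split_blocks
    by (intro sum.cong refl) (simp add: block_index_less ampliate_meas_prep_index T_def)
  also have "\<dots> = (\<Sum>p<k. \<Sum>q<k. \<Sum>l<m. \<Sum>r<n'. \<Sum>s<n'.
      T l p q * (cnj (f (p*n'+r)) * v l r) * (cnj (v l s) * f (q*n'+s)))"
    by (subst (2) sum.swap)
      (simp add: sum_distrib_left sum_distrib_right mult_ac sum.swap[where B = "{..<m}"])
  also have "\<dots> = (\<Sum>p<k. \<Sum>q<k. \<Sum>l<m. cnj (\<alpha> l p) * T l p q * \<alpha> l q)"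
    unfolding \<alpha>_def cnj_sum by (simp add: sum_product sum_distrib_left mult_ac)
  also have "\<dots> = (\<Sum>l<m. \<Sum>p<k. \<Sum>q<k. cnj (\<alpha> l p) * T l p q * \<alpha> l q)"
    by (rule sum_rotate3)
  finally show ?thesis unfolding T_def .
qed

lemma completely_positive_meas_prep:
  assumes G: "\<forall>l<m. psd n (G l)"
  shows "completely_positive n n' (meas_prep n n' m G (\<lambda>l. ketbra n' (v l)))"
  unfolding completely_positive_def
proof (intro allI impI)
  fix k M assume M: "psd (k*n) M"
  let ?A = "ampliate k n n' (meas_prep n n' m G (\<lambda>l. ketbra n' (v l))) M"
  have "Im (\<Sum>l<m. \<Sum>p<k. \<Sum>q<k. cnj (\<alpha> l p) * trace_prod n (G l) (block n M p q) * \<alpha> l q) = 0 \<and>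
        0 \<le> Re (\<Sum>l<m. \<Sum>p<k. \<Sum>q<k. cnj (\<alpha> l p) * trace_prod n (G l) (block n M p q) * \<alpha> l q)" for \<alpha>
    by (rule Im_Re_sum_nonneg) (use trace_prod_blocks_psd[OF _ M] G in auto)
  hence "Im (qform (k*n') ?A f) = 0 \<and> 0 \<le> Re (qform (k*n') ?A f)" for f
    unfolding qform_ampliate_meas_prep .
  moreover have "?A \<in> carrier_mat (k*n') (k*n')" unfolding ampliate_def by simp
  ultimately show "psd (k*n') ?A" unfolding psd_iff_qform by blast
qed

section \<open>A finite set of states determining linear maps\<close>

definition ket :: "nat \<Rightarrow> nat \<Rightarrow> complex" where
  "ket a = (\<lambda>k. if k = a then 1 else 0)"

definition ket_sum :: "nat \<Rightarrow> nat \<Rightarrow> nat \<Rightarrow> complex" where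
  "ket_sum a b = (\<lambda>k. if k = a then 1 else if k = b then 1 else 0)"

definition ket_isum :: "nat \<Rightarrow> nat \<Rightarrow> nat \<Rightarrow> complex" where
  "ket_isum a b = (\<lambda>k. if k = a then 1 else if k = b then \<i> else 0)"

definition probe_states :: "nat \<Rightarrow> complex mat set" where
  "probe_states n = (\<lambda>a. ketbra n (ket a)) ` {..<n} \<union>
     (\<lambda>(a,b). complex_of_real (1/2) \<cdot>\<^sub>m ketbra n (ket_sum a b)) ` {(a,b). a < n \<and> b < n \<and> a \<noteq> b} \<union>
     (\<lambda>(a,b). complex_of_real (1/2) \<cdot>\<^sub>m ketbra n (ket_isum a b)) ` {(a,b). a < n \<and> b < n \<and> a \<noteq> b}"

lemma finite_probe_states: "finite (probe_states n)"
proof -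
  have "{(a,b). a < n \<and> b < n \<and> a \<noteq> b} \<subseteq> {..<n} \<times> {..<n}" by auto
  hence "finite {(a,b). a < n \<and> b < n \<and> a \<noteq> b}" by (rule finite_subset) simp
  thus ?thesis unfolding probe_states_def by simp
qed

lemma cinner_ket: assumes "a < n" shows "cinner n (ket a) (ket a) = 1"
  unfolding cinner_def by (subst sum_supported_single[OF assms]) (auto simp: ket_def)

lemma cinner_ket_sum: assumes "a < n" "b < n" "a \<noteq> b" shows "cinner n (ket_sum a b) (ket_sum a b) = 2"
  unfolding cinner_def by (subst sum_supported_pair[OF assms]) (use assms in \<open>auto simp: ket_sum_def\<close>)

lemma cinner_ket_isum: assumes "a < n" "b < n" "a \<noteq> b" shows "cinner n (ket_isum a b) (ket_isum a b) = 2"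
  unfolding cinner_def by (subst sum_supported_pair[OF assms]) (use assms in \<open>auto simp: ket_isum_def\<close>)

lemma density_half_ketbra:
  assumes "cinner n f f = 2" shows "density n (complex_of_real (1/2) \<cdot>\<^sub>m ketbra n f)"
  unfolding density_def
  using psd_scale[OF psd_ketbra, of "1/2"] mtrace_smult[OF ketbra_carrier] mtrace_ketbra assms by simp

lemma probe_states_density: "\<rho> \<in> probe_states n \<Longrightarrow> density n \<rho>"
  unfolding probe_states_def
  using psd_ketbra mtrace_ketbra cinner_ket density_half_ketbra cinner_ket_sum cinner_ket_isum
  by (auto simp: density_def)

text \<open>Polarization: \<open>|a\<rangle>\<langle>b| = \<onehalf> |a+b\<rangle>\<langle>a+b| + \<i>/2 |a+\<i>b\<rangle>\<langle>a+\<i>b| - (1+\<i>)/2 (|a\<rangle>\<langle>a| + |b\<rangle>\<langle>b|)\<close>.\<close>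

lemma mat_unit_polarization:
  assumes a: "a < n" and b: "b < n" and ab: "a \<noteq> b"
  shows "mat_unit n (a,b) = mat n n (\<lambda>q. \<Sum>t<4. ([1/2, \<i>/2, -(1+\<i>)/2, -(1+\<i>)/2] ! t) *
      ([ketbra n (ket_sum a b), ketbra n (ket_isum a b), ketbra n (ket a), ketbra n (ket b)] ! t) $$ q)"
proof (rule eq_matI)
  fix i j assume "i < dim_row (mat n n (\<lambda>q. \<Sum>t<4. ([1/2, \<i>/2, -(1+\<i>)/2, -(1+\<i>)/2] ! t) *
      ([ketbra n (ket_sum a b), ketbra n (ket_isum a b), ketbra n (ket a), ketbra n (ket b)] ! t) $$ q))"
    "j < dim_col (mat n n (\<lambda>q. \<Sum>t<4. ([1/2, \<i>/2, -(1+\<i>)/2, -(1+\<i>)/2] ! t) *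
      ([ketbra n (ket_sum a b), ketbra n (ket_isum a b), ketbra n (ket a), ketbra n (ket b)] ! t) $$ q))"
  hence ij: "i < n" "j < n" by auto
  have s4: "(\<Sum>t<4. F t) = F 0 + F 1 + F 2 + F (3::nat)" for F :: "nat \<Rightarrow> complex"
    by (simp add: eval_nat_numeral)
  show "mat_unit n (a,b) $$ (i,j) = mat n n (\<lambda>q. \<Sum>t<4. ([1/2, \<i>/2, -(1+\<i>)/2, -(1+\<i>)/2] ! t) *
      ([ketbra n (ket_sum a b), ketbra n (ket_isum a b), ketbra n (ket a), ketbra n (ket b)] ! t) $$ q) $$ (i,j)"
    using ij ab unfolding s4
    by (auto simp: mat_unit_def ketbra_def ket_def ket_sum_def ket_isum_def numeral_eq_Suc field_simps complex_eq_iff)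
qed (simp_all add: mat_unit_def)

lemma lin_map_eq_if_eq_smult:
  assumes L1: "lin_map n d \<Phi>" and L2: "lin_map n d \<Psi>" and X: "X \<in> carrier_mat n n"
    and c: "(c::complex) \<noteq> 0" and e: "\<Phi> (c \<cdot>\<^sub>m X) = \<Psi> (c \<cdot>\<^sub>m X)"
  shows "\<Phi> X = \<Psi> X"
proof (rule eq_matI)
  have e': "c \<cdot>\<^sub>m \<Phi> X = c \<cdot>\<^sub>m \<Psi> X" using e lin_map_smult[OF L1 X] lin_map_smult[OF L2 X] by simp
  fix i j assume "i < dim_row (\<Psi> X)" "j < dim_col (\<Psi> X)"
  hence "i < d" "j < d" using lin_map_carrier[OF L2 X] by auto
  with e' show "\<Phi> X $$ (i,j) = \<Psi> X $$ (i,j)"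
    using c lin_map_carrier[OF L1 X] lin_map_carrier[OF L2 X] by (metis index_smult_mat(1) carrier_matD mult_left_cancel)
qed (use lin_map_carrier[OF L1 X] lin_map_carrier[OF L2 X] in auto)

lemma lin_map_eq_if_eq_on_probe_states:
  assumes L1: "lin_map n d \<Phi>" and L2: "lin_map n d \<Psi>" and R: "\<forall>\<rho>\<in>probe_states n. \<Phi> \<rho> = \<Psi> \<rho>"
    and X: "X \<in> carrier_mat n n"
  shows "\<Phi> X = \<Psi> X"
proof -
  have r1: "\<Phi> (ketbra n (ket a)) = \<Psi> (ketbra n (ket a))" if "a < n" for a
    using R that unfolding probe_states_def by auto
  have r2: "\<Phi> (ketbra n (ket_sum a b)) = \<Psi> (ketbra n (ket_sum a b))"
    and r3: "\<Phi> (ketbra n (ket_isum a b)) = \<Psi> (ketbra n (ket_isum a b))" if "a < n" "b < n" "a \<noteq> b" for a b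
    using R that unfolding probe_states_def
    by (auto intro!: lin_map_eq_if_eq_smult[OF L1 L2 ketbra_carrier, of "complex_of_real (1/2)"])
  have rE: "\<Phi> (mat_unit n p) = \<Psi> (mat_unit n p)" if p: "p \<in> index_pairs n" for p
  proof -
    obtain a b where pab: "p = (a,b)" "a < n" "b < n" using p unfolding index_pairs_def by auto
    show ?thesis
    proof (cases "a = b")
      case True
      have "mat_unit n p = ketbra n (ket a)" unfolding pab True mat_unit_def ketbra_def ket_def by (intro eq_matI) auto
      thus ?thesis using r1 pab by simp
    next
      case False
      define cs where "cs = (\<lambda>t. [1/2, \<i>/2, -(1+\<i>)/2, -(1+\<i>)/2] ! t)"
      define Xs where "Xs = (\<lambda>t. [ketbra n (ket_sum a b), ketbra n (ket_isum a b), ketbra n (ket a), ketbra n (ket b)] ! t)"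
      have Xc: "\<forall>t\<in>{..<4}. Xs t \<in> carrier_mat n n" unfolding Xs_def by (auto simp: less_Suc_eq numeral_eq_Suc)
      have eqE: "mat_unit n p = mat n n (\<lambda>q. \<Sum>t<4. cs t * Xs t $$ q)"
        unfolding pab cs_def Xs_def by (rule mat_unit_polarization[OF pab(2,3) False])
      have XX: "\<forall>t\<in>{..<4}. \<Phi> (Xs t) = \<Psi> (Xs t)"
        unfolding Xs_def using r1 r2 r3 pab False by (auto simp: less_Suc_eq numeral_eq_Suc)
      have "\<Phi> (mat_unit n p) = mat d d (\<lambda>q. \<Sum>t<4. cs t * \<Phi> (Xs t) $$ q)"
        unfolding eqE by (rule lin_map_sum[OF L1 _ Xc]) simp
      also have "\<dots> = mat d d (\<lambda>q. \<Sum>t<4. cs t * \<Psi> (Xs t) $$ q)" using XX by simp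
      also have "\<dots> = \<Psi> (mat_unit n p)"
        unfolding eqE by (rule lin_map_sum[OF L2 _ Xc, symmetric]) simp
      finally show ?thesis .
    qed
  qed
  show ?thesis
    using lin_map_expand[OF L1 X] lin_map_expand[OF L2 X] rE by simp
qed

section \<open>The compact convex set of POVMs\<close>

lemma psd_diag:
  "psd n G \<Longrightarrow> i < n \<Longrightarrow> Im (G $$ (i,i)) = 0 \<and> 0 \<le> Re (G $$ (i,i))"
  using psdD(1,2)[of n G "\<lambda>k. if k = i then 1 else 0"] qform_single[of i n G 1] by simp

lemma psd_offdiag_bound:
  assumes G: "psd n G" and i: "i < n" and j: "j < n" and ij: "i \<noteq> j"
  shows "2 * cmod (G $$ (i,j)) \<le> Re (G $$ (i,i)) + Re (G $$ (j,j))"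
proof (cases "G $$ (i,j) = 0")
  case True thus ?thesis using psd_diag[OF G i] psd_diag[OF G j] by simp
next
  case False
  define z where "z = G $$ (i,j)"
  have z0: "cmod z > 0" using False unfolding z_def by simp
  define c where "c = - cnj z / complex_of_real (cmod z)"
  have Gji: "G $$ (j,i) = cnj z" unfolding z_def using hermitianD[OF psd_hermitian[OF G] i j] by simp
  have zz: "z * cnj z = complex_of_real ((cmod z)^2)" by (rule complex_norm_square[symmetric])
  have "z * c = - complex_of_real (cmod z)" "cnj c * cnj z = - complex_of_real (cmod z)" "cnj c * c = 1"
    unfolding c_def using z0 zz by (simp_all add: field_simps power2_eq_square mult.commute)
  hence "qform n G (\<lambda>k. if k = i then 1 else if k = j then c else 0) =
      G $$ (i,i) + G $$ (j,j) - 2 * complex_of_real (cmod z)"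
    unfolding qform_pair[OF i j ij] Gji unfolding z_def[symmetric] by (simp add: algebra_simps)
  moreover have "0 \<le> Re (qform n G (\<lambda>k. if k = i then 1 else if k = j then c else 0))" by (rule psdD(2)[OF G])
  ultimately show ?thesis unfolding z_def by simp
qed

lemma POVM_diag_le_1:
  assumes P: "POVM n {..<m} P" and l: "l < m" and a: "a < n"
  shows "Im (P l $$ (a,a)) = 0 \<and> 0 \<le> Re (P l $$ (a,a)) \<and> Re (P l $$ (a,a)) \<le> 1"
proof -
  have nn: "Im (P l $$ (a,a)) = 0 \<and> 0 \<le> Re (P l $$ (a,a))" if "l < m" for l
    using psd_diag[OF _ a] P that unfolding POVM_iff by blast
  have "(\<Sum>l<m. P l $$ (a,a)) = 1" using P a unfolding POVM_iff sums_to_id_def by auto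
  hence "(\<Sum>l<m. Re (P l $$ (a,a))) = 1" by (metis Re_sum one_complex.sel(1))
  moreover have "Re (P l $$ (a,a)) \<le> (\<Sum>l<m. Re (P l $$ (a,a)))"
    by (rule member_le_sum) (use l nn in auto)
  ultimately show ?thesis using nn[OF l] by simp
qed

lemma POVM_entry_bound:
  assumes P: "POVM n {..<m} P" and l: "l < m" and i: "i < n" and j: "j < n"
  shows "cmod (P l $$ (i,j)) \<le> 1"
proof (cases "i = j")
  case True
  have "P l $$ (i,i) = complex_of_real (Re (P l $$ (i,i)))"
    using POVM_diag_le_1[OF P l i] by (simp add: complex_eq_iff)
  hence "cmod (P l $$ (i,i)) = Re (P l $$ (i,i))" using POVM_diag_le_1[OF P l i] by (metis norm_of_real abs_of_nonneg)
  thus ?thesis using POVM_diag_le_1[OF P l i] True by simp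
next
  case False
  have "psd n (P l)" using P l unfolding POVM_iff by simp
  from psd_offdiag_bound[OF this i j False] show ?thesis
    using POVM_diag_le_1[OF P l i] POVM_diag_le_1[OF P l j] by simp
qed

lemma qform_lincomb:
  "A \<in> carrier_mat n n \<Longrightarrow> B \<in> carrier_mat n n \<Longrightarrow>
   qform n (a \<cdot>\<^sub>m A + b \<cdot>\<^sub>m B) f = a * qform n A f + b * qform n B f"
  unfolding qform_def by (simp add: sum.distrib sum_distrib_left algebra_simps)

lemma psd_convex_comb:
  assumes A: "psd n A" and B: "psd n B" and t: "0 \<le> t" "t \<le> 1"
  shows "psd n (complex_of_real (1 - t) \<cdot>\<^sub>m A + complex_of_real t \<cdot>\<^sub>m B)"
  using A B t psdD(3)[OF A] psdD(3)[OF B] unfolding psd_iff_qform by (simp add: qform_lincomb)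

lemma POVM_cong: "(\<And>x. x \<in> X \<Longrightarrow> P x = Q x) \<Longrightarrow> POVM d X P = POVM d X Q"
  unfolding POVM_def by (simp cong: ball_cong sum.cong)

text \<open>POVMs with \<open>m\<close> outcomes on \<open>\<complex>\<^sup>n\<close>, encoded by their entries \<open>g (l, i, j) = (G\<^sub>l)\<^sub>i\<^sub>j\<close> (and \<open>0\<close>
  outside the index range), so that they form a subset of one fixed topological space.\<close>

definition povm_elem :: "nat \<Rightarrow> (nat \<times> nat \<times> nat \<Rightarrow> complex) \<Rightarrow> nat \<Rightarrow> complex mat" where
  "povm_elem n g l = mat n n (\<lambda>(i,j). g (l,i,j))"

definition povm_coeffs :: "nat \<Rightarrow> nat \<Rightarrow> (nat \<times> nat \<times> nat \<Rightarrow> complex) set" where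
  "povm_coeffs m n = {g. (\<forall>l i j. \<not>(l < m \<and> i < n \<and> j < n) \<longrightarrow> g (l,i,j) = 0) \<and> POVM n {..<m} (povm_elem n g)}"

definition povm_encode :: "nat \<Rightarrow> nat \<Rightarrow> (nat \<Rightarrow> complex mat) \<Rightarrow> (nat \<times> nat \<times> nat \<Rightarrow> complex)" where
  "povm_encode m n P = (\<lambda>(l,i,j). if l < m \<and> i < n \<and> j < n then P l $$ (i,j) else 0)"

lemma povm_coeffs_POVM: "g \<in> povm_coeffs m n \<Longrightarrow> POVM n {..<m} (povm_elem n g)"
  unfolding povm_coeffs_def by blast

lemma povm_elem_encode: "P l \<in> carrier_mat n n \<Longrightarrow> l < m \<Longrightarrow> povm_elem n (povm_encode m n P) l = P l"
  unfolding povm_elem_def povm_encode_def by (intro eq_matI) auto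

lemma povm_encode_in_povm_coeffs:
  assumes P: "POVM n {..<m} P"
  shows "povm_encode m n P \<in> povm_coeffs m n"
proof -
  have "POVM n {..<m} (povm_elem n (povm_encode m n P)) = POVM n {..<m} P"
    by (intro POVM_cong) (use P povm_elem_encode psdD(3) in \<open>auto simp: POVM_iff\<close>)
  thus ?thesis using P unfolding povm_coeffs_def povm_encode_def by auto
qed

lemma qform_povm_elem: "qform n (povm_elem n g l) f = (\<Sum>i<n. \<Sum>j<n. cnj (f i) * g (l,i,j) * f j)"
  unfolding qform_def povm_elem_def by (intro sum.cong refl) simp

lemma closed_povm_coeffs: "closed (povm_coeffs m n)"
proof -
  have e: "povm_coeffs m n = {g. \<forall>l i j. \<not>(l < m \<and> i < n \<and> j < n) \<longrightarrow> g (l,i,j) = 0} \<inter>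
     {g. \<forall>l. l < m \<longrightarrow> (\<forall>f. Im (\<Sum>i<n. \<Sum>j<n. cnj (f i) * g (l,i,j) * f j) = 0 \<and>
                                0 \<le> Re (\<Sum>i<n. \<Sum>j<n. cnj (f i) * g (l,i,j) * f j))} \<inter>
     {g. \<forall>i j. i < n \<longrightarrow> j < n \<longrightarrow> (\<Sum>l<m. g (l,i,j)) = (if i = j then 1 else 0)}"
    unfolding povm_coeffs_def POVM_iff sums_to_id_def psd_iff_qform qform_povm_elem
    by (auto simp: povm_elem_def)
  show ?thesis unfolding e
    by (intro closed_Int closed_Collect_all closed_Collect_imp open_Collect_const closed_Collect_conj
        closed_Collect_eq closed_Collect_le continuous_intros)
qed

lemma povm_coeffs_bound:
  assumes g: "g \<in> povm_coeffs m n"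
  shows "cmod (g x) \<le> 1"
proof -
  obtain l i j where x: "x = (l,i,j)" by (cases x) auto
  show ?thesis
  proof (cases "l < m \<and> i < n \<and> j < n")
    case False thus ?thesis using g x unfolding povm_coeffs_def by auto
  next
    case True
    thus ?thesis using POVM_entry_bound[OF povm_coeffs_POVM[OF g], of l i j] x
      by (simp add: povm_elem_def)
  qed
qed

lemma compact_povm_coeffs: "compact (povm_coeffs m n)"
proof -
  have "povm_coeffs m n = {g. \<forall>x. g x \<in> {z. cmod z \<le> 1}} \<inter> povm_coeffs m n"
    using povm_coeffs_bound by blast
  also have "compact \<dots>"
    by (rule compact_Int_closed[OF compact_Collect_all_mem[OF compact_unit_disc] closed_povm_coeffs])
  finally show ?thesis .
qed

lemma povm_coeffs_convex:
  assumes g0: "g0 \<in> povm_coeffs m n" and g: "g \<in> povm_coeffs m n" and t: "0 \<le> t" "t \<le> 1"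
  shows "(\<lambda>x. complex_of_real (1 - t) * g0 x + complex_of_real t * g x) \<in> povm_coeffs m n"
  unfolding povm_coeffs_def POVM_iff sums_to_id_def
proof (intro CollectI conjI allI impI ballI)
  fix l i j assume "\<not> (l < m \<and> i < n \<and> j < n)"
  thus "complex_of_real (1 - t) * g0 (l,i,j) + complex_of_real t * g (l,i,j) = 0"
    using g0 g unfolding povm_coeffs_def by auto
next
  fix l assume "l \<in> {..<m}"
  hence "psd n (povm_elem n g0 l)" "psd n (povm_elem n g l)"
    using povm_coeffs_POVM[OF g0] povm_coeffs_POVM[OF g] unfolding POVM_iff by auto
  moreover have "povm_elem n (\<lambda>x. complex_of_real (1 - t) * g0 x + complex_of_real t * g x) l =
    complex_of_real (1 - t) \<cdot>\<^sub>m povm_elem n g0 l + complex_of_real t \<cdot>\<^sub>m povm_elem n g l"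
    by (rule eq_matI) (auto simp: povm_elem_def)
  ultimately show "psd n (povm_elem n (\<lambda>x. complex_of_real (1 - t) * g0 x + complex_of_real t * g x) l)"
    using psd_convex_comb t by simp
next
  fix i j assume ij: "i < n" "j < n"
  have "(\<Sum>l<m. g0 (l,i,j)) = (if i = j then 1 else 0)" "(\<Sum>l<m. g (l,i,j)) = (if i = j then 1 else 0)"
    using povm_coeffs_POVM[OF g0] povm_coeffs_POVM[OF g] ij
    unfolding POVM_iff sums_to_id_def by (auto simp: povm_elem_def)
  moreover have "(\<Sum>l\<in>{..<m}. povm_elem n (\<lambda>x. complex_of_real (1 - t) * g0 x + complex_of_real t * g x) l $$ (i,j)) =
    complex_of_real (1 - t) * (\<Sum>l<m. g0 (l,i,j)) + complex_of_real t * (\<Sum>l<m. g (l,i,j))"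
    using ij by (simp add: povm_elem_def sum.distrib sum_distrib_left)
  ultimately show "(\<Sum>l\<in>{..<m}. povm_elem n (\<lambda>x. complex_of_real (1 - t) * g0 x + complex_of_real t * g x) l $$ (i,j)) =
    (if i = j then 1 else 0)"
    by (auto simp: algebra_simps)
qed

section \<open>Channels with commuting outputs are dephased\<close>

definition dephasing :: "nat \<Rightarrow> (nat \<Rightarrow> nat \<Rightarrow> complex) \<Rightarrow> complex mat \<Rightarrow> complex mat" where
  "dephasing d u = meas_prep d d d (\<lambda>l. ketbra d (u l)) (\<lambda>l. ketbra d (u l))"

lemma dephasing_eigenbasis:
  assumes on: "orthonormal d d u" and K: "K \<in> carrier_mat d d"
    and ev: "\<forall>l<d. \<exists>\<mu>. u l \<in> eigenspace d K \<mu>"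
  shows "dephasing d u K = K"
proof -
  obtain \<mu> where \<mu>: "\<And>l. l < d \<Longrightarrow> u l \<in> eigenspace d K (\<mu> l)" using ev by metis
  have tr: "trace_prod d (ketbra d (u l)) K = \<mu> l" if "l < d" for l
    using qform_eigenvector[OF on that \<mu>[OF that]] by (simp add: trace_prod_comm qform_eq_trace_prod)
  show ?thesis
  proof (rule eq_matI)
    fix i j assume "i < dim_row K" "j < dim_col K"
    hence ij: "i < d" "j < d" using K by auto
    have "dephasing d u K $$ (i,j) = (\<Sum>l<d. \<mu> l * (u l i * cnj (u l j)))"
      unfolding dephasing_def meas_prep_def using ij tr by (simp add: ketbra_def)
    also have "\<dots> = K $$ (i,j)" using eigenbasis_expansion[OF on K \<mu> ij] by (simp add: mult.assoc)
    finally show "dephasing d u K $$ (i,j) = K $$ (i,j)" .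
  qed (use K in \<open>auto simp: dephasing_def meas_prep_def\<close>)
qed

text \<open>The outputs of \<open>N'\<close> on the finitely many probe states commute, so they share an eigenbasis \<open>u\<close>;
  \<open>N'\<close> and \<open>dephasing u \<circ> N'\<close> agree on the probe states, hence everywhere.\<close>

lemma commuting_outputs_dephased:
  assumes N': "CPTP dA d N'"
    and ab: "\<forall>\<rho> \<sigma>. density dA \<rho> \<and> density dA \<sigma> \<longrightarrow> N' \<rho> * N' \<sigma> = N' \<sigma> * N' \<rho>"
  obtains u where "orthonormal d d u" "\<forall>X\<in>carrier_mat dA dA. N' X = dephasing d u (N' X)"
proof -
  define Ks where "Ks = N' ` probe_states dA"
  have psdK: "\<And>\<rho>. \<rho> \<in> probe_states dA \<Longrightarrow> psd d (N' \<rho>)"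
    using probe_states_density CPTP_psd[OF N'] unfolding density_def by blast
  have fin: "finite Ks" unfolding Ks_def using finite_probe_states by simp
  have herm: "\<forall>K\<in>Ks. hermitian d K" unfolding Ks_def using psdK psd_hermitian by blast
  have comm: "\<forall>K\<in>Ks. \<forall>L\<in>Ks. K * L = L * K" unfolding Ks_def using ab probe_states_density by blast
  obtain u where on: "orthonormal d d u" and ev: "\<forall>l<d. \<forall>K\<in>Ks. \<exists>\<mu>. u l \<in> eigenspace d K \<mu>"
    using common_eigenbasis[OF fin herm comm] by blast
  have LN': "lin_map dA d N'" using N' by (simp add: CPTP_def)
  have "N' X = dephasing d u (N' X)" if "X \<in> carrier_mat dA dA" for X
  proof (rule lin_map_eq_if_eq_on_probe_states[OF LN' _ _ that])
    show "lin_map dA d (\<lambda>X. dephasing d u (N' X))"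
      unfolding dephasing_def by (rule lin_map_comp[OF LN' lin_map_meas_prep])
    show "\<forall>\<rho>\<in>probe_states dA. N' \<rho> = dephasing d u (N' \<rho>)"
    proof
      fix \<rho> assume \<rho>: "\<rho> \<in> probe_states dA"
      have "\<forall>l<d. \<exists>\<mu>. u l \<in> eigenspace d (N' \<rho>) \<mu>" using ev \<rho> unfolding Ks_def by blast
      from dephasing_eigenbasis[OF on psdD(3)[OF psdK[OF \<rho>]] this] show "N' \<rho> = dephasing d u (N' \<rho>)" ..
    qed
  qed
  thus ?thesis using on that by blast
qed

section \<open>Turning Hermitian matrices into an ensemble\<close>

lemma qform_bound:
  assumes Dc: "D \<in> carrier_mat n n"
  shows "cmod (qform n D f) \<le> (\<Sum>a<n. \<Sum>b<n. cmod (D $$ (a,b))) * Re (cinner n f f)"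
proof -
  have sq: "(cmod (f a))^2 \<le> Re (cinner n f f)" if "a < n" for a
  proof -
    have "Re (cinner n f f) = (\<Sum>i<n. (cmod (f i))^2)" using cinner_self_real(3)[of n f] by simp
    moreover have "(cmod (f a))^2 \<le> (\<Sum>i<n. (cmod (f i))^2)" by (rule member_le_sum) (use that in auto)
    ultimately show ?thesis by simp
  qed
  have pr: "cmod (f a) * cmod (f b) \<le> Re (cinner n f f)" if "a < n" "b < n" for a b
  proof -
    have "2 * (cmod (f a) * cmod (f b)) \<le> (cmod (f a))^2 + (cmod (f b))^2"
      using sum_squares_bound[of "cmod (f a)" "cmod (f b)"] by (simp add: power2_eq_square)
    thus ?thesis using sq[OF that(1)] sq[OF that(2)] by simp
  qed
  have "cmod (qform n D f) \<le> (\<Sum>a<n. \<Sum>b<n. cmod (cnj (f a) * D $$ (a,b) * f b))"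
    unfolding qform_def by (rule order_trans[OF norm_sum sum_mono]) (rule norm_sum)
  also have "\<dots> \<le> (\<Sum>a<n. \<Sum>b<n. cmod (D $$ (a,b)) * Re (cinner n f f))"
  proof (intro sum_mono)
    fix a b assume "a \<in> {..<n}" "b \<in> {..<n}"
    hence "cmod (D $$ (a,b)) * (cmod (f a) * cmod (f b)) \<le> cmod (D $$ (a,b)) * Re (cinner n f f)"
      by (intro mult_left_mono pr) auto
    thus "cmod (cnj (f a) * D $$ (a,b) * f b) \<le> cmod (D $$ (a,b)) * Re (cinner n f f)"
      by (simp add: norm_mult mult_ac)
  qed
  also have "\<dots> = (\<Sum>a<n. \<Sum>b<n. cmod (D $$ (a,b))) * Re (cinner n f f)" by (simp add: sum_distrib_right)
  finally show ?thesis .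
qed

lemma qform_shift:
  assumes Dc: "D \<in> carrier_mat n n"
  shows "qform n (D + complex_of_real c \<cdot>\<^sub>m 1\<^sub>m n) f = qform n D f + complex_of_real c * cinner n f f"
proof -
  have "qform n (D + complex_of_real c \<cdot>\<^sub>m 1\<^sub>m n) f = (\<Sum>i<n. \<Sum>j<n. cnj (f i) * D $$ (i,j) * f j +
      (if i = j then complex_of_real c * (cnj (f i) * f j) else 0))"
    unfolding qform_def using Dc by (intro sum.cong refl) (auto simp: algebra_simps)
  also have "\<dots> = qform n D f + complex_of_real c * cinner n f f"
    unfolding qform_def cinner_def by (simp add: sum.distrib sum_distrib_left)
  finally show ?thesis .
qed

lemma psd_hermitian_shift:
  assumes D: "hermitian n D" and c: "(\<Sum>a<n. \<Sum>b<n. cmod (D $$ (a,b))) \<le> c"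
  shows "psd n (D + complex_of_real c \<cdot>\<^sub>m 1\<^sub>m n)"
  unfolding psd_iff_qform
proof (intro conjI allI)
  have Dc: "D \<in> carrier_mat n n" using D by (simp add: hermitian_def)
  show "D + complex_of_real c \<cdot>\<^sub>m 1\<^sub>m n \<in> carrier_mat n n" using Dc by simp
  fix f
  have b: "cmod (qform n D f) \<le> c * Re (cinner n f f)"
    using qform_bound[OF Dc, of f] c cinner_self_real(2)[of n f] by (meson mult_right_mono order_trans)
  have "- Re (qform n D f) \<le> cmod (qform n D f)" using abs_Re_le_cmod[of "qform n D f"] by linarith
  thus "0 \<le> Re (qform n (D + complex_of_real c \<cdot>\<^sub>m 1\<^sub>m n) f)" unfolding qform_shift[OF Dc] using b by simp
  show "Im (qform n (D + complex_of_real c \<cdot>\<^sub>m 1\<^sub>m n) f) = 0"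
    unfolding qform_shift[OF Dc] using hermitian_qform_real[OF D] cinner_self_real(1)[of n f] by simp
qed

lemma trace_prod_shift:
  assumes Dc: "D \<in> carrier_mat n n" and M: "M \<in> carrier_mat n n"
  shows "trace_prod n M (D + complex_of_real c \<cdot>\<^sub>m 1\<^sub>m n) = trace_prod n M D + complex_of_real c * mtrace M"
proof -
  have "trace_prod n M (D + complex_of_real c \<cdot>\<^sub>m 1\<^sub>m n) =
      (\<Sum>i<n. \<Sum>j<n. M $$ (i,j) * D $$ (j,i) + (if i = j then complex_of_real c * M $$ (i,j) else 0))"
    unfolding trace_prod_def using Dc by (intro sum.cong refl) (auto simp: algebra_simps)
  also have "\<dots> = trace_prod n M D + complex_of_real c * mtrace M"
    unfolding trace_prod_def mtrace_carrier[OF M] by (simp add: sum.distrib sum_distrib_left)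
  finally show ?thesis .
qed

lemma hermitian_mtrace_bound:
  assumes D: "hermitian n D"
  shows "Im (mtrace D) = 0" "- (\<Sum>a<n. \<Sum>b<n. cmod (D $$ (a,b))) \<le> Re (mtrace D)"
proof -
  have Dc: "D \<in> carrier_mat n n" using D by (simp add: hermitian_def)
  have "Im (D $$ (a,a)) = 0" if "a < n" for a
    using hermitianD[OF D that that] by (metis Reals_cnj_iff complex_is_Real_iff)
  thus "Im (mtrace D) = 0" unfolding mtrace_carrier[OF Dc] Im_sum by simp
  have "(\<Sum>a<n. cmod (D $$ (a,a))) \<le> (\<Sum>a<n. \<Sum>b<n. cmod (D $$ (a,b)))"
    by (intro sum_mono member_le_sum[where f = "\<lambda>b. cmod (D $$ (_,b))"]) auto
  moreover have "- (\<Sum>a<n. cmod (D $$ (a,a))) \<le> (\<Sum>a<n. Re (D $$ (a,a)))"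
    unfolding sum_negf[symmetric]
  proof (intro sum_mono)
    fix a show "- cmod (D $$ (a,a)) \<le> Re (D $$ (a,a))" using abs_Re_le_cmod[of "D $$ (a,a)"] by linarith
  qed
  ultimately show "- (\<Sum>a<n. \<Sum>b<n. cmod (D $$ (a,b))) \<le> Re (mtrace D)"
    unfolding mtrace_carrier[OF Dc] Re_sum by linarith
qed

lemma sum_mtrace_sums_to_id:
  assumes M: "sums_to_id d {..<m} M" and Mc: "\<forall>l<m. M l \<in> carrier_mat d d"
  shows "(\<Sum>l<m. Re (mtrace (M l))) = real d"
proof -
  have "(\<Sum>l<m. mtrace (M l)) = (\<Sum>l<m. \<Sum>a<d. M l $$ (a,a))"
    using Mc by (intro sum.cong refl) (simp add: mtrace_carrier)
  also have "\<dots> = (\<Sum>a<d. \<Sum>l<m. M l $$ (a,a))" by (rule sum.swap)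
  also have "\<dots> = of_nat d" using M unfolding sums_to_id_def by simp
  finally show ?thesis by (simp flip: Re_sum)
qed

lemma mtrace_hermitian_shift:
  assumes D: "hermitian n D" and n: "0 < n" and S: "(\<Sum>a<n. \<Sum>b<n. cmod (D $$ (a,b))) \<le> S"
  defines "H \<equiv> D + complex_of_real (S + 1) \<cdot>\<^sub>m 1\<^sub>m n"
  shows "mtrace H = complex_of_real (Re (mtrace H))" "1 \<le> Re (mtrace H)"
proof -
  have Dc: "D \<in> carrier_mat n n" using D by (simp add: hermitian_def)
  have Hc: "H \<in> carrier_mat n n" unfolding H_def using Dc by simp
  have "mtrace H = (\<Sum>a<n. D $$ (a,a) + complex_of_real (S + 1))"
    unfolding mtrace_carrier[OF Hc] using Dc by (intro sum.cong refl) (simp add: H_def)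
  hence "mtrace H = mtrace D + of_nat n * complex_of_real (S + 1)"
    unfolding mtrace_carrier[OF Dc] by (simp add: sum.distrib)
  moreover have "0 \<le> S" by (rule order_trans[OF _ S]) (intro sum_nonneg norm_ge_zero)
  hence "S + 1 \<le> (S + 1) * real n" using n by simp
  ultimately show "mtrace H = complex_of_real (Re (mtrace H))" "1 \<le> Re (mtrace H)"
    using hermitian_mtrace_bound[OF D] S by (auto simp: complex_eq_iff algebra_simps)
qed

lemma Re_mtrace_mult_scaled_shift:
  assumes M: "M \<in> carrier_mat n n" and D: "D \<in> carrier_mat n n"
  shows "Re (mtrace (M * (complex_of_real s \<cdot>\<^sub>m (D + complex_of_real c \<cdot>\<^sub>m 1\<^sub>m n)))) =
    s * (Re (trace_prod n M D) + c * Re (mtrace M))"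
proof -
  have H: "D + complex_of_real c \<cdot>\<^sub>m 1\<^sub>m n \<in> carrier_mat n n" using D by simp
  have "mtrace (M * (complex_of_real s \<cdot>\<^sub>m (D + complex_of_real c \<cdot>\<^sub>m 1\<^sub>m n))) =
      complex_of_real s * (trace_prod n M D + complex_of_real c * mtrace M)"
    by (simp add: mtrace_mult[OF M] H trace_prod_smult_right[OF H] trace_prod_shift[OF D M])
  thus ?thesis by (simp add: algebra_simps)
qed

text \<open>Shift every \<open>D\<^sub>l\<close> by the same multiple \<open>c\<close> of the identity to make it positive, and
  normalise the traces: \<open>\<rho>\<^sub>l = H\<^sub>l / tr H\<^sub>l\<close> with prior \<open>p\<^sub>l \<propto> tr H\<^sub>l\<close>.\<close>

lemma hermitian_family_ensemble:
  assumes dA: "0 < dA" and m: "0 < m" and D: "\<forall>l<m. hermitian dA (D l)"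
  obtains p \<rho> c T where "ensemble dA {..<m} p \<rho>" "0 < T"
    "\<And>M. sums_to_id dA {..<m} M \<Longrightarrow> \<forall>l<m. M l \<in> carrier_mat dA dA \<Longrightarrow>
       success_prob {..<m} p \<rho> M = ((\<Sum>l<m. Re (trace_prod dA (M l) (D l))) + c * real dA) / T"
proof -
  have Dc: "D l \<in> carrier_mat dA dA" if "l < m" for l using D that by (simp add: hermitian_def)
  define S where "S = (\<Sum>l<m. \<Sum>a<dA. \<Sum>b<dA. cmod (D l $$ (a,b)))"
  define c where "c = S + 1"
  have Sl: "(\<Sum>a<dA. \<Sum>b<dA. cmod (D l $$ (a,b))) \<le> S" if "l < m" for l
    unfolding S_def by (rule member_le_sum[where f = "\<lambda>l. \<Sum>a<dA. \<Sum>b<dA. cmod (D l $$ (a,b))"])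
      (use that in \<open>auto intro!: sum_nonneg\<close>)
  define H where "H l = D l + complex_of_real c \<cdot>\<^sub>m 1\<^sub>m dA" for l
  define r where "r l = Re (mtrace (H l))" for l
  have trH: "mtrace (H l) = complex_of_real (r l)" and r1: "1 \<le> r l" if "l < m" for l
    using mtrace_hermitian_shift[OF D[rule_format, OF that] dA Sl[OF that]] unfolding H_def r_def c_def by auto
  define T where "T = (\<Sum>l<m. r l)"
  have T: "0 < T" unfolding T_def using m r1 by (intro sum_pos) (auto, fastforce)
  define p where "p l = r l / T" for l
  define \<rho> where "\<rho> l = complex_of_real (1 / r l) \<cdot>\<^sub>m H l" for l
  have ens: "ensemble dA {..<m} p \<rho>"
    unfolding ensemble_def
  proof (intro conjI ballI)
    fix l assume "l \<in> {..<m}"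
    hence l: "l < m" by simp
    have Hc: "H l \<in> carrier_mat dA dA" unfolding H_def using Dc[OF l] by simp
    have "psd dA (H l)"
      unfolding H_def by (rule psd_hermitian_shift) (use D Sl[OF l] l in \<open>auto simp: c_def\<close>)
    moreover have "mtrace (\<rho> l) = 1" unfolding \<rho>_def mtrace_smult[OF Hc] trH[OF l] using r1[OF l] by simp
    ultimately show "density dA (\<rho> l)" unfolding density_def \<rho>_def
      using psd_scale[of dA "H l" "1 / r l"] r1[OF l] by simp
    show "0 \<le> p l" unfolding p_def using r1[OF l] T by simp
  qed (use T in \<open>simp_all add: p_def T_def flip: sum_divide_distrib\<close>)
  have "success_prob {..<m} p \<rho> M = ((\<Sum>l<m. Re (trace_prod dA (M l) (D l))) + c * real dA) / T"
    if M: "sums_to_id dA {..<m} M" and Mc: "\<forall>l<m. M l \<in> carrier_mat dA dA" for M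
  proof -
    have "p l * Re (mtrace (M l * \<rho> l)) = (Re (trace_prod dA (M l) (D l)) + c * Re (mtrace (M l))) / T"
      if l: "l < m" for l
      using Re_mtrace_mult_scaled_shift[of "M l" dA "D l" "1 / r l" c] Mc Dc[OF l] r1[OF l] l
      unfolding p_def \<rho>_def H_def by simp
    hence "success_prob {..<m} p \<rho> M = (\<Sum>l<m. Re (trace_prod dA (M l) (D l)) + c * Re (mtrace (M l))) / T"
      unfolding success_prob_def by (simp add: sum_divide_distrib)
    thus ?thesis using sum_mtrace_sums_to_id[OF M Mc] by (simp add: sum.distrib sum_distrib_left[symmetric])
  qed
  thus ?thesis using that ens T by blast
qed

section \<open>Matching POVMs in the Heisenberg picture\<close>

lemma cmod_add_real_mult_square:
  "(cmod (w + complex_of_real t * v))^2 = (cmod w)^2 + 2*t*Re (cnj w * v) + t^2 * (cmod v)^2"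
  unfolding cmod_power2 by (simp add: power2_eq_square algebra_simps)

lemma nonpos_if_le_small_multiples:
  fixes X Y :: real
  assumes "\<And>t. 0 < t \<Longrightarrow> t \<le> 1 \<Longrightarrow> 2 * X \<le> t * Y"
  shows "X \<le> 0"
proof (rule ccontr)
  assume "\<not> X \<le> 0"
  hence X: "X > 0" by simp
  define t where "t = min 1 (X / (\<bar>Y\<bar> + 1))"
  have t0: "0 < t" unfolding t_def using X by simp
  have "t * Y \<le> t * \<bar>Y\<bar>" using t0 by (simp add: mult_left_mono)
  also have "\<dots> \<le> (X / (\<bar>Y\<bar> + 1)) * \<bar>Y\<bar>" unfolding t_def by (intro mult_right_mono) auto
  also have "\<dots> < X"
  proof -
    have "(X / (\<bar>Y\<bar> + 1)) * \<bar>Y\<bar> = X * (\<bar>Y\<bar> / (\<bar>Y\<bar> + 1))" by simp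
    also have "\<dots> < X * 1" using X by (intro mult_strict_left_mono) auto
    finally show ?thesis by simp
  qed
  finally have "t * Y < X" .
  moreover have "2 * X \<le> t * Y" by (rule assms[OF t0]) (simp add: t_def)
  ultimately show False using X by simp
qed

lemma Re_trace_prod_hermitian:
  assumes D: "hermitian n D"
  shows "Re (trace_prod n M D) = (\<Sum>a<n. \<Sum>b<n. Re (cnj (D $$ (a,b)) * M $$ (a,b)))"
  unfolding trace_prod_def Re_sum using hermitianD[OF D] by (intro sum.cong refl) (simp add: mult.commute)

text \<open>With \<open>N'\<close> dephased in the orthonormal basis \<open>u\<close>, \<open>N'\<close> factors through \<open>N\<close> as soon as the POVM
  \<open>target\<close> is matched by a pulled-back POVM \<open>pulled g\<close>; \<open>mismatch g\<close> is the squared Hilbert-Schmidt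
  distance between the two families.\<close>

locale povm_matching =
  fixes dA n m :: nat and N N' :: "complex mat \<Rightarrow> complex mat" and u :: "nat \<Rightarrow> nat \<Rightarrow> complex"
  assumes dA: "dA > 0" and m: "m > 0" and N: "CPTP dA n N" and N': "CPTP dA m N'"
    and on: "orthonormal m m u"
    and dephased: "\<forall>X\<in>carrier_mat dA dA. N' X = dephasing m u (N' X)"
begin

definition target :: "nat \<Rightarrow> complex mat" where
  "target l = dual_map dA m N' (ketbra m (u l))"

definition pulled :: "(nat \<times> nat \<times> nat \<Rightarrow> complex) \<Rightarrow> nat \<Rightarrow> complex mat" where
  "pulled g l = dual_map dA n N (povm_elem n g l)"

definition mismatch :: "(nat \<times> nat \<times> nat \<Rightarrow> complex) \<Rightarrow> real" where
  "mismatch g = (\<Sum>l<m. \<Sum>a<dA. \<Sum>b<dA. (cmod (pulled g l $$ (a,b) - target l $$ (a,b)))^2)"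

lemma lin_map_N: "lin_map dA n N" using N by (simp add: CPTP_def)
lemma lin_map_N': "lin_map dA m N'" using N' by (simp add: CPTP_def)

lemma POVM_basis: "POVM m {..<m} (\<lambda>l. ketbra m (u l))"
  unfolding POVM_iff sums_to_id_def using psd_ketbra orthonormal_complete[OF on] by (simp add: ketbra_def)

lemma POVM_target: "POVM dA {..<m} target"
  unfolding target_def by (rule dual_map_POVM[OF N' POVM_basis])

lemma POVM_pulled: "g \<in> povm_coeffs m n \<Longrightarrow> POVM dA {..<m} (pulled g)"
  unfolding pulled_def by (rule dual_map_POVM[OF N povm_coeffs_POVM])

lemma pulled_index: "a < dA \<Longrightarrow> b < dA \<Longrightarrow>
  pulled g l $$ (a,b) = (\<Sum>i<n. \<Sum>j<n. g (l,i,j) * N (mat_unit dA (b,a)) $$ (j,i))"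
  unfolding pulled_def dual_map_def trace_prod_def povm_elem_def by simp

lemma pulled_lincomb: "a' < dA \<Longrightarrow> b' < dA \<Longrightarrow>
  pulled (\<lambda>x. a * g0 x + b * g x) l $$ (a',b') = a * pulled g0 l $$ (a',b') + b * pulled g l $$ (a',b')"
  unfolding pulled_index by (simp add: sum.distrib sum_distrib_left algebra_simps)

lemma mismatch_attains_min: "\<exists>g0\<in>povm_coeffs m n. \<forall>g\<in>povm_coeffs m n. mismatch g0 \<le> mismatch g"
proof (rule continuous_attains_inf[OF compact_povm_coeffs])
  show "povm_coeffs m n \<noteq> {}" using povm_encode_in_povm_coeffs[OF POVM_trivial[of "{..<m}" 0]] m by blast
  have "mismatch = (\<lambda>g. \<Sum>l<m. \<Sum>a<dA. \<Sum>b<dA.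
      (cmod ((\<Sum>i<n. \<Sum>j<n. g (l,i,j) * N (mat_unit dA (b,a)) $$ (j,i)) - target l $$ (a,b)))^2)"
    unfolding mismatch_def by (intro ext sum.cong refl) (simp add: pulled_index)
  thus "continuous_on (povm_coeffs m n) mismatch" by (simp add: continuous_intros)
qed

lemma mismatch_eq_0_iff: "mismatch g = 0 \<longleftrightarrow> (\<forall>l<m. pulled g l = target l)"
proof
  assume "mismatch g = 0"
  hence "\<forall>l<m. \<forall>a<dA. \<forall>b<dA. (cmod (pulled g l $$ (a,b) - target l $$ (a,b)))^2 = 0"
    unfolding mismatch_def by (simp add: sum_nonneg_eq_0_iff sum_nonneg)
  thus "\<forall>l<m. pulled g l = target l"
    by (auto intro!: eq_matI simp: pulled_def target_def dual_map_def)
qed (simp add: mismatch_def)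

lemma factorization_if_mismatch_0:
  assumes g0: "g0 \<in> povm_coeffs m n" and match: "mismatch g0 = 0"
  shows "\<exists>C. CPTP n m C \<and> (\<forall>X \<in> carrier_mat dA dA. N' X = C (N X))"
proof -
  define C where "C = meas_prep n m m (povm_elem n g0) (\<lambda>l. ketbra m (u l))"
  have G: "POVM n {..<m} (povm_elem n g0)" by (rule povm_coeffs_POVM[OF g0])
  have "CPTP n m C" unfolding CPTP_def C_def
  proof (intro conjI lin_map_meas_prep completely_positive_meas_prep trace_preserving_meas_prep)
    show "\<forall>l<m. psd n (povm_elem n g0 l)" "sums_to_id n {..<m} (povm_elem n g0)"
      using G unfolding POVM_iff by auto
    show "\<forall>l<m. ketbra m (u l) \<in> carrier_mat m m \<and> mtrace (ketbra m (u l)) = 1"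
      using on unfolding orthonormal_def by (simp add: mtrace_ketbra)
  qed
  moreover have "N' X = C (N X)" if X: "X \<in> carrier_mat dA dA" for X
  proof -
    have "trace_prod m (ketbra m (u l)) (N' X) = trace_prod n (povm_elem n g0 l) (N X)" if "l < m" for l
      using match that trace_prod_dual_map[OF lin_map_N' X] trace_prod_dual_map[OF lin_map_N X]
      unfolding mismatch_eq_0_iff target_def pulled_def by metis
    hence "dephasing m u (N' X) = C (N X)" unfolding C_def dephasing_def meas_prep_def
      by (intro arg_cong[where f = "mat m m"] ext sum.cong) simp_all
    thus ?thesis using dephased X by simp
  qed
  ultimately show ?thesis by blast
qed

text \<open>The variational inequality of a nearest point in a convex set:
  \<open>Re \<langle>target - pulled g\<^sub>0, pulled g - pulled g\<^sub>0\<rangle> \<le> 0\<close>.\<close>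

lemma mismatch_min_variational:
  assumes g0: "g0 \<in> povm_coeffs m n" and min: "\<forall>g\<in>povm_coeffs m n. mismatch g0 \<le> mismatch g"
    and g: "g \<in> povm_coeffs m n"
  shows "(\<Sum>l<m. \<Sum>a<dA. \<Sum>b<dA. Re (cnj (target l $$ (a,b) - pulled g0 l $$ (a,b)) *
            (pulled g l $$ (a,b) - pulled g0 l $$ (a,b)))) \<le> 0"
proof -
  define P0 where "P0 l a b = (cmod (pulled g0 l $$ (a,b) - target l $$ (a,b)))^2" for l a b
  define Rf where "Rf l a b = Re (cnj (target l $$ (a,b) - pulled g0 l $$ (a,b)) * (pulled g l $$ (a,b) - pulled g0 l $$ (a,b)))" for l a b
  define Qf where "Qf l a b = (cmod (pulled g l $$ (a,b) - pulled g0 l $$ (a,b)))^2" for l a b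
  define X where "X = (\<Sum>l<m. \<Sum>a<dA. \<Sum>b<dA. Rf l a b)"
  define Y where "Y = (\<Sum>l<m. \<Sum>a<dA. \<Sum>b<dA. Qf l a b)"
  have "2 * X \<le> t * Y" if t: "0 < t" "t \<le> 1" for t
  proof -
    define gt where "gt = (\<lambda>x. complex_of_real (1 - t) * g0 x + complex_of_real t * g x)"
    have "(cmod (pulled gt l $$ (a,b) - target l $$ (a,b)))^2 = P0 l a b - 2 * t * Rf l a b + t^2 * Qf l a b"
      if ab: "a < dA" "b < dA" for l a b
    proof -
      define w where "w = pulled g0 l $$ (a,b) - target l $$ (a,b)"
      define v where "v = pulled g l $$ (a,b) - pulled g0 l $$ (a,b)"
      have eq: "pulled gt l $$ (a,b) - target l $$ (a,b) = w + complex_of_real t * v"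
        unfolding w_def v_def gt_def pulled_lincomb[OF ab] by (simp add: algebra_simps)
      have "Re (cnj w * v) = - Rf l a b" "(cmod w)^2 = P0 l a b" "(cmod v)^2 = Qf l a b"
        unfolding w_def v_def Rf_def P0_def Qf_def by (simp_all add: algebra_simps)
      thus ?thesis unfolding eq cmod_add_real_mult_square by simp
    qed
    hence "mismatch gt = (\<Sum>l<m. \<Sum>a<dA. \<Sum>b<dA. P0 l a b - 2 * t * Rf l a b + t^2 * Qf l a b)"
      unfolding mismatch_def by (intro sum.cong refl) simp
    also have "\<dots> = mismatch g0 - 2 * t * X + t^2 * Y"
      unfolding mismatch_def X_def Y_def P0_def[symmetric]
      by (simp add: sum.distrib sum_subtractf sum_distrib_left)
    finally have "mismatch gt = mismatch g0 - 2 * t * X + t^2 * Y" .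
    moreover have "gt \<in> povm_coeffs m n" unfolding gt_def using povm_coeffs_convex[OF g0 g] t by simp
    ultimately have "t * (2 * X) \<le> t * (t * Y)" using min by (force simp: power2_eq_square mult_ac)
    thus ?thesis using t by simp
  qed
  hence "X \<le> 0" by (rule nonpos_if_le_small_multiples)
  thus ?thesis unfolding X_def Rf_def .
qed

lemma hermitian_target_diff:
  assumes g: "g \<in> povm_coeffs m n" and l: "l < m"
  shows "hermitian dA (target l - pulled g l)"
proof -
  have "psd dA (target l)" "psd dA (pulled g l)"
    using POVM_target POVM_pulled[OF g] l unfolding POVM_iff by simp_all
  hence h: "hermitian dA (target l)" "hermitian dA (pulled g l)" by (simp_all add: psd_hermitian)
  have c: "target l \<in> carrier_mat dA dA" "pulled g l \<in> carrier_mat dA dA"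
    unfolding target_def pulled_def by simp_all
  show ?thesis unfolding hermitian_def
  proof (intro conjI allI impI)
    show "target l - pulled g l \<in> carrier_mat dA dA" using c(2) by (rule minus_carrier_mat)
    fix i j assume ij: "i < dA" "j < dA"
    have "(target l - pulled g l) $$ (i,j) = target l $$ (i,j) - pulled g l $$ (i,j)"
      "(target l - pulled g l) $$ (j,i) = target l $$ (j,i) - pulled g l $$ (j,i)"
      using c ij by auto
    thus "(target l - pulled g l) $$ (i,j) = cnj ((target l - pulled g l) $$ (j,i))"
      using hermitianD[OF h(1) ij(2,1)] hermitianD[OF h(2) ij(2,1)] by simp
  qed
qed

lemma mismatch_nonneg: "0 \<le> mismatch g"
  unfolding mismatch_def by (intro sum_nonneg) auto

lemma mismatch_eq_norm:
  "mismatch g = (\<Sum>l<m. \<Sum>a<dA. \<Sum>b<dA. Re (cnj ((target l - pulled g l) $$ (a,b)) * (target l - pulled g l) $$ (a,b)))"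
  unfolding mismatch_def
proof (intro sum.cong refl)
  fix l a b assume "a \<in> {..<dA}" "b \<in> {..<dA}"
  hence "(target l - pulled g l) $$ (a,b) = target l $$ (a,b) - pulled g l $$ (a,b)"
    by (simp add: target_def pulled_def dual_map_def)
  hence "(cmod (pulled g l $$ (a,b) - target l $$ (a,b)))^2 = (cmod ((target l - pulled g l) $$ (a,b)))^2"
    by (simp add: norm_minus_commute)
  also have "\<dots> = Re (cnj ((target l - pulled g l) $$ (a,b)) * (target l - pulled g l) $$ (a,b))"
    using complex_norm_square[of "(target l - pulled g l) $$ (a,b)"] by (metis Re_complex_of_real mult.commute)
  finally show "(cmod (pulled g l $$ (a,b) - target l $$ (a,b)))^2 =
      Re (cnj ((target l - pulled g l) $$ (a,b)) * (target l - pulled g l) $$ (a,b))" .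
qed

lemma mismatch_min_separation:
  assumes g0: "g0 \<in> povm_coeffs m n" and min: "\<forall>g\<in>povm_coeffs m n. mismatch g0 \<le> mismatch g"
    and g: "g \<in> povm_coeffs m n"
  shows "(\<Sum>l<m. Re (trace_prod dA (pulled g l) (target l - pulled g0 l))) \<le>
         (\<Sum>l<m. Re (trace_prod dA (target l) (target l - pulled g0 l))) - mismatch g0"
proof -
  define D where "D l = target l - pulled g0 l" for l
  have Dent: "D l $$ (a,b) = target l $$ (a,b) - pulled g0 l $$ (a,b)" if "a < dA" "b < dA" for l a b
    unfolding D_def target_def pulled_def using that by (simp add: dual_map_def)
  have re: "Re (trace_prod dA (M l) (D l)) = (\<Sum>a<dA. \<Sum>b<dA. Re (cnj (D l $$ (a,b)) * M l $$ (a,b)))"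
    if "l < m" for M l
    unfolding D_def using Re_trace_prod_hermitian[OF hermitian_target_diff[OF g0 that]] .
  have "(\<Sum>l<m. \<Sum>a<dA. \<Sum>b<dA. Re (cnj (D l $$ (a,b)) * pulled g l $$ (a,b)) -
        Re (cnj (D l $$ (a,b)) * pulled g0 l $$ (a,b))) \<le> 0"
    using mismatch_min_variational[OF g0 min g] by (simp add: Dent algebra_simps)
  moreover have "(\<Sum>l<m. \<Sum>a<dA. \<Sum>b<dA. Re (cnj (D l $$ (a,b)) * pulled g0 l $$ (a,b))) =
      (\<Sum>l<m. \<Sum>a<dA. \<Sum>b<dA. Re (cnj (D l $$ (a,b)) * target l $$ (a,b))) - mismatch g0"
    unfolding mismatch_eq_norm D_def[symmetric] by (simp add: Dent sum_subtractf[symmetric] algebra_simps)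
  ultimately show ?thesis unfolding D_def[symmetric] by (simp add: re sum_subtractf)
qed

lemma success_prob_pulled:
  assumes P: "POVM n {..<m} P" and \<rho>: "\<forall>l<m. \<rho> l \<in> carrier_mat dA dA"
  shows "success_prob {..<m} p (\<lambda>l. N (\<rho> l)) P = success_prob {..<m} p \<rho> (pulled (povm_encode m n P))"
proof -
  have Pc: "\<forall>l<m. P l \<in> carrier_mat n n" using P psdD(3) unfolding POVM_iff by blast
  have "success_prob {..<m} p (\<lambda>l. N (\<rho> l)) P = success_prob {..<m} p \<rho> (\<lambda>l. dual_map dA n N (P l))"
    using \<rho> Pc by (intro success_prob_dual_map[OF lin_map_N]) auto
  also have "\<dots> = success_prob {..<m} p \<rho> (pulled (povm_encode m n P))"
    unfolding success_prob_def pulled_def using Pc by (intro sum.cong refl) (simp add: povm_elem_encode)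
  finally show ?thesis .
qed

lemma not_more_informative_if_mismatch_pos:
  assumes g0: "g0 \<in> povm_coeffs m n" and min: "\<forall>g\<in>povm_coeffs m n. mismatch g0 \<le> mismatch g"
    and pos: "mismatch g0 > 0"
  shows "\<not> more_informative dA n N m N'"
proof
  assume mi: "more_informative dA n N m N'"
  define D where "D l = target l - pulled g0 l" for l
  have "\<forall>l<m. hermitian dA (D l)" unfolding D_def using hermitian_target_diff[OF g0] by blast
  then obtain p \<rho> c T where ens: "ensemble dA {..<m} p \<rho>" and T: "0 < T" and succ:
    "\<And>M. sums_to_id dA {..<m} M \<Longrightarrow> \<forall>l<m. M l \<in> carrier_mat dA dA \<Longrightarrow>
       success_prob {..<m} p \<rho> M = ((\<Sum>l<m. Re (trace_prod dA (M l) (D l))) + c * real dA) / T"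
    by (rule hermitian_family_ensemble[OF dA m]) blast
  have \<rho>c: "\<forall>l<m. \<rho> l \<in> carrier_mat dA dA" using ens psdD(3) unfolding ensemble_def density_def by auto
  have succ_POVM: "success_prob {..<m} p \<rho> M = ((\<Sum>l<m. Re (trace_prod dA (M l) (D l))) + c * real dA) / T"
    if "POVM dA {..<m} M" for M
    using that psdD(3) by (intro succ) (auto simp: POVM_iff)
  define \<beta> where "\<beta> = ((\<Sum>l<m. Re (trace_prod dA (target l) (D l))) + c * real dA) / T"
  have "P_guess n {..<m} p (\<lambda>l. N (\<rho> l)) \<le> \<beta> - mismatch g0 / T"
  proof (rule P_guess_le[OF ensemble_CPTP[OF ens N]])
    fix P assume P: "POVM n {..<m} P"
    have g: "povm_encode m n P \<in> povm_coeffs m n" by (rule povm_encode_in_povm_coeffs[OF P])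
    have "success_prob {..<m} p (\<lambda>l. N (\<rho> l)) P =
        ((\<Sum>l<m. Re (trace_prod dA (pulled (povm_encode m n P) l) (D l))) + c * real dA) / T"
      unfolding success_prob_pulled[OF P \<rho>c] by (rule succ_POVM[OF POVM_pulled[OF g]])
    also have "\<dots> \<le> \<beta> - mismatch g0 / T"
      using mismatch_min_separation[OF g0 min g] T unfolding \<beta>_def D_def
      by (simp add: divide_right_mono diff_divide_distrib[symmetric])
    finally show "success_prob {..<m} p (\<lambda>l. N (\<rho> l)) P \<le> \<beta> - mismatch g0 / T" .
  qed
  moreover have "\<beta> \<le> P_guess m {..<m} p (\<lambda>l. N' (\<rho> l))"
  proof -
    have "\<beta> = success_prob {..<m} p \<rho> target"
      unfolding \<beta>_def by (rule succ_POVM[OF POVM_target, symmetric])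
    also have "\<dots> = success_prob {..<m} p (\<lambda>l. N' (\<rho> l)) (\<lambda>l. ketbra m (u l))"
      unfolding target_def using \<rho>c by (intro success_prob_dual_map[OF lin_map_N', symmetric]) auto
    also have "\<dots> \<le> P_guess m {..<m} p (\<lambda>l. N' (\<rho> l))"
      by (rule success_prob_le_P_guess[OF ensemble_CPTP[OF ens N'] POVM_basis])
    finally show ?thesis .
  qed
  moreover have "P_guess m {..<m} p (\<lambda>l. N' (\<rho> l)) \<le> P_guess n {..<m} p (\<lambda>l. N (\<rho> l))"
    using mi ens unfolding more_informative_def by blast
  moreover have "0 < mismatch g0 / T" using pos T by simp
  ultimately show False by linarith
qed

end

theorem lemma2:
  fixes dA dB dB' :: nat and N N' :: "complex mat \<Rightarrow> complex mat"
  assumes "dA > 0" and "dB > 0" and "dB' > 0"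
    and "CPTP dA dB N" and "CPTP dA dB' N'"
    and abelian: "\<forall>\<rho> \<sigma>. density dA \<rho> \<and> density dA \<sigma> \<longrightarrow> N' \<rho> * N' \<sigma> = N' \<sigma> * N' \<rho>"
  shows "more_informative dA dB N dB' N' \<longleftrightarrow>
    (\<exists>C. CPTP dB dB' C \<and> (\<forall>X \<in> carrier_mat dA dA. N' X = C (N X)))"
proof
  assume mi: "more_informative dA dB N dB' N'"
  obtain u where "orthonormal dB' dB' u" "\<forall>X\<in>carrier_mat dA dA. N' X = dephasing dB' u (N' X)"
    using commuting_outputs_dephased[OF assms(5) abelian] by blast
  then interpret povm_matching dA dB dB' N N' u
    using assms by unfold_locales auto
  obtain g0 where g0: "g0 \<in> povm_coeffs dB' dB" and min: "\<forall>g\<in>povm_coeffs dB' dB. mismatch g0 \<le> mismatch g"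
    using mismatch_attains_min by blast
  have "mismatch g0 = 0"
    using not_more_informative_if_mismatch_pos[OF g0 min] mi mismatch_nonneg[of g0] by linarith
  thus "\<exists>C. CPTP dB dB' C \<and> (\<forall>X \<in> carrier_mat dA dA. N' X = C (N X))"
    by (rule factorization_if_mismatch_0[OF g0])
next
  assume "\<exists>C. CPTP dB dB' C \<and> (\<forall>X \<in> carrier_mat dA dA. N' X = C (N X))"
  thus "more_informative dA dB N dB' N'" using more_informative_if_factorizes assms(4,5) by blast
qed

end
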